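(* Let $R$ be a commutative ring such that every semi-compact $R$-module is pure-injective. Then every prime ideal of $R$ is maximal.
   Context: An $R$-module $M$ is semi-compact if every finitely solvable system of congruences $x\equiv x_\alpha \pmod{M[I_\alpha]}$ ($\alpha\in\Lambda$, $x_\alpha\in M$, $I_\alpha$ an ideal, $M[I_\alpha]=\{m\in M: I_\alpha m=0\}$) has a simultaneous solution in $M$. A module is pure-injective if it is injective relative to all pure exact sequences (those remaining exact under tensoring with every module). *)

theory Defs
  imports "HOL-Algebra.Module" "HOL-Algebra.Ideal"
begin

definition ann_sub :: "'a ring \<Rightarrow> ('a, 'b, 'c) module_scheme \<Rightarrow> 'a set \<Rightarrow> 'b set" where
  "ann_sub R M I = {m \<in> carrier M. \<forall>r\<in>I. r \<odot>\<^bsub>M\<^esub> m = \<zero>\<^bsub>M\<^esub>}"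

text \<open>Semi-compact: every finitely solvable system of congruences
  x = x_alpha (mod M[I_alpha]) has a simultaneous solution.  A system is
  given as the set S of its pairs (x_alpha, I_alpha).\<close>
definition semi_compact :: "'a ring \<Rightarrow> ('a, 'b, 'c) module_scheme \<Rightarrow> bool" where
  "semi_compact R M \<longleftrightarrow>
     (\<forall>S. S \<subseteq> {(y, I). y \<in> carrier M \<and> ideal I R} \<longrightarrow>
        (\<forall>F. F \<subseteq> S \<and> finite F \<longrightarrow>
             (\<exists>x\<in>carrier M. \<forall>(y, I)\<in>F. x \<ominus>\<^bsub>M\<^esub> y \<in> ann_sub R M I)) \<longrightarrow>
        (\<exists>x\<in>carrier M. \<forall>(y, I)\<in>S. x \<ominus>\<^bsub>M\<^esub> y \<in> ann_sub R M I))"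

definition mod_lin :: "'a ring \<Rightarrow> ('a, 'b, 'c) module_scheme \<Rightarrow> ('a, 'd, 'e) module_scheme
    \<Rightarrow> ('b \<Rightarrow> 'd) \<Rightarrow> bool" where
  "mod_lin R A B h \<longleftrightarrow> h \<in> carrier A \<rightarrow> carrier B \<and>
     (\<forall>x\<in>carrier A. \<forall>y\<in>carrier A. h (x \<oplus>\<^bsub>A\<^esub> y) = h x \<oplus>\<^bsub>B\<^esub> h y) \<and>
     (\<forall>r\<in>carrier R. \<forall>x\<in>carrier A. h (r \<odot>\<^bsub>A\<^esub> x) = r \<odot>\<^bsub>B\<^esub> h x)"

text \<open>Tensor products A (x) N, presented as finite formal R-linear combinations
  of pairs (a, n) modulo the submodule of bilinearity relations.\<close>
definition formal_sums :: "'a ring \<Rightarrow> ('a, 'b, 'c) module_scheme \<Rightarrow> ('a, 'd, 'e) module_scheme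
    \<Rightarrow> ('b \<times> 'd \<Rightarrow> 'a) set" where
  "formal_sums R A N = {c. (\<forall>p. c p \<in> carrier R) \<and> finite {p. c p \<noteq> \<zero>\<^bsub>R\<^esub>} \<and>
       {p. c p \<noteq> \<zero>\<^bsub>R\<^esub>} \<subseteq> carrier A \<times> carrier N}"

definition delta :: "'a ring \<Rightarrow> 'p \<Rightarrow> 'p \<Rightarrow> 'a" where
  "delta R q = (\<lambda>p. if p = q then \<one>\<^bsub>R\<^esub> else \<zero>\<^bsub>R\<^esub>)"

definition fs_add :: "'a ring \<Rightarrow> ('p \<Rightarrow> 'a) \<Rightarrow> ('p \<Rightarrow> 'a) \<Rightarrow> 'p \<Rightarrow> 'a" where
  "fs_add R c d = (\<lambda>p. c p \<oplus>\<^bsub>R\<^esub> d p)"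

definition fs_sub :: "'a ring \<Rightarrow> ('p \<Rightarrow> 'a) \<Rightarrow> ('p \<Rightarrow> 'a) \<Rightarrow> 'p \<Rightarrow> 'a" where
  "fs_sub R c d = (\<lambda>p. c p \<ominus>\<^bsub>R\<^esub> d p)"

definition fs_smult :: "'a ring \<Rightarrow> 'a \<Rightarrow> ('p \<Rightarrow> 'a) \<Rightarrow> 'p \<Rightarrow> 'a" where
  "fs_smult R r c = (\<lambda>p. r \<otimes>\<^bsub>R\<^esub> c p)"

inductive_set tensor_rel :: "'a ring \<Rightarrow> ('a, 'b, 'c) module_scheme \<Rightarrow> ('a, 'd, 'e) module_scheme
    \<Rightarrow> ('b \<times> 'd \<Rightarrow> 'a) set"
  for R A N where
  zero: "(\<lambda>p. \<zero>\<^bsub>R\<^esub>) \<in> tensor_rel R A N"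
| add: "c \<in> tensor_rel R A N \<Longrightarrow> d \<in> tensor_rel R A N \<Longrightarrow> fs_add R c d \<in> tensor_rel R A N"
| smult: "r \<in> carrier R \<Longrightarrow> c \<in> tensor_rel R A N \<Longrightarrow> fs_smult R r c \<in> tensor_rel R A N"
| lin1: "a \<in> carrier A \<Longrightarrow> a' \<in> carrier A \<Longrightarrow> n \<in> carrier N \<Longrightarrow>
     fs_sub R (fs_sub R (delta R (a \<oplus>\<^bsub>A\<^esub> a', n)) (delta R (a, n))) (delta R (a', n)) \<in> tensor_rel R A N"
| lin2: "a \<in> carrier A \<Longrightarrow> n \<in> carrier N \<Longrightarrow> n' \<in> carrier N \<Longrightarrow>
     fs_sub R (fs_sub R (delta R (a, n \<oplus>\<^bsub>N\<^esub> n')) (delta R (a, n))) (delta R (a, n')) \<in> tensor_rel R A N"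
| lin3: "r \<in> carrier R \<Longrightarrow> a \<in> carrier A \<Longrightarrow> n \<in> carrier N \<Longrightarrow>
     fs_sub R (delta R (r \<odot>\<^bsub>A\<^esub> a, n)) (fs_smult R r (delta R (a, n))) \<in> tensor_rel R A N"
| lin4: "r \<in> carrier R \<Longrightarrow> a \<in> carrier A \<Longrightarrow> n \<in> carrier N \<Longrightarrow>
     fs_sub R (delta R (a, r \<odot>\<^bsub>N\<^esub> n)) (fs_smult R r (delta R (a, n))) \<in> tensor_rel R A N"

text \<open>The map f (x) N on formal sums.\<close>
definition tmap :: "'a ring \<Rightarrow> ('a, 'b, 'c) module_scheme \<Rightarrow> ('b \<Rightarrow> 'x)
    \<Rightarrow> ('b \<times> 'd \<Rightarrow> 'a) \<Rightarrow> ('x \<times> 'd \<Rightarrow> 'a)" where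
  "tmap R A f c = (\<lambda>(b, n). finsum R (\<lambda>a. c (a, n)) {a. a \<in> carrier A \<and> f a = b \<and> c (a, n) \<noteq> \<zero>\<^bsub>R\<^esub>})"

text \<open>Pure exact sequence 0 -> A -f-> B -g-> C -> 0: exact, and remains exact
  after tensoring with every module N (of the same carrier type).\<close>
definition pure_exact :: "'a ring \<Rightarrow> ('a, 'b) module \<Rightarrow> ('b \<Rightarrow> 'b) \<Rightarrow> ('a, 'b) module
    \<Rightarrow> ('b \<Rightarrow> 'b) \<Rightarrow> ('a, 'b) module \<Rightarrow> bool" where
  "pure_exact R A f B g C \<longleftrightarrow>
     module R A \<and> module R B \<and> module R C \<and> mod_lin R A B f \<and> mod_lin R B C g \<and>
     inj_on f (carrier A) \<and> g ` carrier B = carrier C \<and>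
     {b \<in> carrier B. g b = \<zero>\<^bsub>C\<^esub>} = f ` carrier A \<and>
     (\<forall>N :: ('a, 'b) module. module R N \<longrightarrow>
        (\<forall>c\<in>formal_sums R A N. tmap R A f c \<in> tensor_rel R B N \<longrightarrow> c \<in> tensor_rel R A N) \<and>
        (\<forall>c\<in>formal_sums R B N. tmap R B g c \<in> tensor_rel R C N \<longrightarrow>
            (\<exists>d\<in>formal_sums R A N. fs_sub R c (tmap R A f d) \<in> tensor_rel R B N)) \<and>
        (\<forall>c\<in>formal_sums R C N.
            (\<exists>d\<in>formal_sums R B N. fs_sub R c (tmap R B g d) \<in> tensor_rel R C N)))"

definition pure_injective :: "'a ring \<Rightarrow> ('a, 'b) module \<Rightarrow> bool" where
  "pure_injective R M \<longleftrightarrow>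
     (\<forall>(A :: ('a, 'b) module) f B g C. pure_exact R A f B g C \<longrightarrow>
        (\<forall>h. mod_lin R A M h \<longrightarrow> (\<exists>k. mod_lin R B M k \<and> (\<forall>a\<in>carrier A. k (f a) = h a))))"

end

theory Submission
  imports Defs
begin

text \<open>Suppose \<open>P\<close> is prime but not maximal, and pick \<open>a \<notin> P\<close> that is not a unit modulo
  \<open>P\<close>. Over the domain \<open>D = R/P\<close> let \<open>K\<close> be the kernel of \<open>D\<^sup>(\<^sup>\<nat>\<^sup>) \<rightarrow> D[1/a]\<close>,
  \<open>e\<^sub>i \<mapsto> a\<^sup>-\<^sup>i\<close>. Being torsion-free over \<open>D\<close>, \<open>K\<close> has only the annihilator submodules
  \<open>0\<close> and \<open>K\<close>, so it is semi-compact. The inclusion \<open>K \<subseteq> D\<^sup>(\<^sup>\<nat>\<^sup>)\<close> splits over every finite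
  subset of \<open>K\<close> (truncate at a large index \<open>N\<close> and correct the coordinate \<open>e\<^sub>N\<close>), hence it is
  pure. It does not split: a retraction would make \<open>w\<^sub>0 = e\<^sub>0 - k(e\<^sub>0)\<close> divisible by all
  powers of \<open>a\<close>, which for a finitely supported vector forces \<open>a\<close> to be a unit modulo \<open>P\<close>.
  So \<open>K\<close> is semi-compact but not pure-injective.\<close>

lemma (in abelian_group) a_minus_self: "x \<in> carrier G \<Longrightarrow> x \<ominus> x = \<zero>"
  by (simp add: a_minus_def r_neg)

lemma (in abelian_group) a_minus_add_cancel:
  "x \<in> carrier G \<Longrightarrow> y \<in> carrier G \<Longrightarrow> (x \<ominus> y) \<oplus> y = x"
  by (simp add: a_minus_def a_assoc l_neg)

lemma (in abelian_group) a_minus_zero: "x \<in> carrier G \<Longrightarrow> x \<ominus> \<zero> = x"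
  by (metis a_minus_add_cancel r_zero minus_closed zero_closed)

lemma (in abelian_group) a_minus_eq_zero_imp_eq:
  "x \<in> carrier G \<Longrightarrow> y \<in> carrier G \<Longrightarrow> x \<ominus> y = \<zero> \<Longrightarrow> x = y"
  by (metis a_minus_add_cancel l_zero)

lemma (in abelian_group) a_minus_minus_swap:
  "x \<in> carrier G \<Longrightarrow> y \<in> carrier G \<Longrightarrow> \<ominus> (x \<ominus> y) = y \<ominus> x"
  by (simp add: a_minus_def minus_add a_comm)

lemma (in abelian_group) a_minus_telescope:
  "x \<in> carrier G \<Longrightarrow> y \<in> carrier G \<Longrightarrow> z \<in> carrier G \<Longrightarrow> x \<ominus> z = (x \<ominus> y) \<oplus> (y \<ominus> z)"
  by (simp add: a_minus_def a_assoc[symmetric]) (simp add: a_assoc l_neg)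

lemma (in abelian_group) a_minus_minus_commute:
  "x \<in> carrier G \<Longrightarrow> y \<in> carrier G \<Longrightarrow> z \<in> carrier G \<Longrightarrow> (x \<ominus> y) \<ominus> z = (x \<ominus> z) \<ominus> y"
  by (simp add: a_minus_def a_ac)

lemma (in abelian_group) a_add_minus_add:
  "x \<in> carrier G \<Longrightarrow> y \<in> carrier G \<Longrightarrow> u \<in> carrier G \<Longrightarrow> v \<in> carrier G \<Longrightarrow>
    (x \<oplus> y) \<ominus> (u \<oplus> v) = (x \<ominus> u) \<oplus> (y \<ominus> v)"
  by (simp add: a_minus_def minus_add a_ac)

lemma (in module) smult_minus_distr:
  "a \<in> carrier R \<Longrightarrow> x \<in> carrier M \<Longrightarrow> y \<in> carrier M \<Longrightarrow>
    a \<odot>\<^bsub>M\<^esub> (x \<ominus>\<^bsub>M\<^esub> y) = a \<odot>\<^bsub>M\<^esub> x \<ominus>\<^bsub>M\<^esub> a \<odot>\<^bsub>M\<^esub> y"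
  by (simp add: a_minus_def smult_r_distr smult_r_minus)

lemma (in ring) r_diff_distr:
  "r \<in> carrier R \<Longrightarrow> x \<in> carrier R \<Longrightarrow> y \<in> carrier R \<Longrightarrow> r \<otimes> x \<ominus> r \<otimes> y = r \<otimes> (x \<ominus> y)"
  by (simp add: a_minus_def r_distr r_minus)

section \<open>Formal sums and tensor relations\<close>

definition fs_support :: "'a ring \<Rightarrow> ('p \<Rightarrow> 'a) \<Rightarrow> 'p set" where
  "fs_support R c = {p. c p \<noteq> \<zero>\<^bsub>R\<^esub>}"

lemma fs_add_apply: "fs_add R c d p = c p \<oplus>\<^bsub>R\<^esub> d p" by (simp add: fs_add_def)
lemma fs_sub_apply: "fs_sub R c d p = c p \<ominus>\<^bsub>R\<^esub> d p" by (simp add: fs_sub_def)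
lemma fs_smult_apply: "fs_smult R r c p = r \<otimes>\<^bsub>R\<^esub> c p" by (simp add: fs_smult_def)
lemmas fs_simps = fs_add_apply fs_sub_apply fs_smult_apply

lemma formal_sums_iff: "c \<in> formal_sums R A N \<longleftrightarrow>
   (\<forall>p. c p \<in> carrier R) \<and> finite (fs_support R c) \<and> fs_support R c \<subseteq> carrier A \<times> carrier N"
  by (simp add: formal_sums_def fs_support_def)

lemma mod_lin_closed: "mod_lin R A B h \<Longrightarrow> h \<in> carrier A \<rightarrow> carrier B"
  by (simp add: mod_lin_def)

lemma mod_lin_minus:
  assumes A: "module R A" and B: "module R B" and h: "mod_lin R A B h"
    and x: "x \<in> carrier A" and y: "y \<in> carrier A"
  shows "h (x \<ominus>\<^bsub>A\<^esub> y) = h x \<ominus>\<^bsub>B\<^esub> h y"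
proof -
  interpret A: module R A by (rule A)
  interpret B: module R B by (rule B)
  have "h x = h ((x \<ominus>\<^bsub>A\<^esub> y) \<oplus>\<^bsub>A\<^esub> y)"
    using x y by (simp add: a_minus_def A.a_assoc A.l_neg)
  also have "\<dots> = h (x \<ominus>\<^bsub>A\<^esub> y) \<oplus>\<^bsub>B\<^esub> h y"
    using h x y by (simp add: mod_lin_def)
  finally show ?thesis
    using x y mod_lin_closed[OF h] by (simp add: a_minus_def B.a_assoc B.r_neg Pi_iff)
qed

locale cring_modules = cring R for R :: "'a ring" (structure)

context cring_modules
begin

lemma formal_sums_closed: "c \<in> formal_sums R A N \<Longrightarrow> c p \<in> carrier R"
  by (cases p) (simp add: formal_sums_iff)

lemma formal_sums_zero: "(\<lambda>p. \<zero>) \<in> formal_sums R A N"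
  by (simp add: formal_sums_iff fs_support_def)

lemma formal_sums_add:
  assumes "c \<in> formal_sums R A N" "d \<in> formal_sums R A N"
  shows "fs_add R c d \<in> formal_sums R A N"
proof -
  have "fs_support R (fs_add R c d) \<subseteq> fs_support R c \<union> fs_support R d"
    using assms by (auto simp: fs_support_def formal_sums_iff fs_simps)
  then show ?thesis using assms unfolding formal_sums_iff
    by (auto intro: finite_subset simp: fs_simps)
qed

lemma formal_sums_smult:
  assumes "r \<in> carrier R" "c \<in> formal_sums R A N"
  shows "fs_smult R r c \<in> formal_sums R A N"
proof -
  have "fs_support R (fs_smult R r c) \<subseteq> fs_support R c"
    using assms by (auto simp: fs_support_def formal_sums_iff fs_simps)
  then show ?thesis using assms unfolding formal_sums_iff
    by (auto intro: finite_subset simp: fs_simps)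
qed

lemma formal_sums_sub:
  assumes "c \<in> formal_sums R A N" "d \<in> formal_sums R A N"
  shows "fs_sub R c d \<in> formal_sums R A N"
proof -
  have "fs_support R (fs_sub R c d) \<subseteq> fs_support R c \<union> fs_support R d"
    using assms by (auto simp: fs_support_def formal_sums_iff a_minus_def fs_simps)
  then show ?thesis using assms unfolding formal_sums_iff
    by (auto intro: finite_subset simp: fs_simps)
qed

lemma delta_closed: "delta R q p \<in> carrier R"
  by (simp add: delta_def)

lemma formal_sums_delta:
  assumes "a \<in> carrier A" "n \<in> carrier N"
  shows "delta R (a, n) \<in> formal_sums R A N"
proof -
  have "fs_support R (delta R (a, n)) \<subseteq> {(a, n)}"
    by (auto simp: fs_support_def delta_def)
  then show ?thesis using assms unfolding formal_sums_iff
    by (auto intro: finite_subset simp: delta_closed)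
qed

lemma tensor_rel_formal_sums:
  assumes A: "module R A" and N: "module R N" and c: "c \<in> tensor_rel R A N"
  shows "c \<in> formal_sums R A N"
proof -
  interpret A: module R A by (rule A)
  interpret N: module R N by (rule N)
  from c show ?thesis
    by induction
      (auto intro!: formal_sums_zero formal_sums_add formal_sums_smult formal_sums_sub
        formal_sums_delta)
qed

lemma formal_sums_induct [consumes 1, case_names zero step]:
  assumes c: "c \<in> formal_sums R A N" and zero: "P (\<lambda>p. \<zero>)"
    and step: "\<And>d r p. d \<in> formal_sums R A N \<Longrightarrow> p \<in> fs_support R c \<Longrightarrow>
       r \<in> carrier R \<Longrightarrow> P d \<Longrightarrow> P (fs_add R d (fs_smult R r (delta R p)))"
  shows "P c"
proof -
  define restr where "restr S = (\<lambda>q. if q \<in> S then c q else \<zero>)" for S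
  have restr_formal_sums: "restr S \<in> formal_sums R A N" if "S \<subseteq> fs_support R c" for S
    using that c by (auto simp: restr_def formal_sums_iff fs_support_def intro: finite_subset)
  have "P (restr S)" if "finite S" "S \<subseteq> fs_support R c" for S
    using that
  proof (induction S rule: finite_induct)
    case empty
    then show ?case using zero by (simp add: restr_def)
  next
    case (insert p S)
    have "restr (insert p S) = fs_add R (restr S) (fs_smult R (c p) (delta R p))"
      using insert.hyps
      by (auto simp: restr_def delta_def formal_sums_closed[OF c] fs_simps intro!: ext)
    then show ?case
      using insert restr_formal_sums[of S] by (auto intro: step simp: formal_sums_closed[OF c])
  qed
  moreover have "restr (fs_support R c) = c"
    by (auto simp: restr_def fs_support_def intro!: ext)
  ultimately show ?thesis
    using c by (metis formal_sums_iff order_refl)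
qed

lemma tmap_eq_finsum:
  assumes c: "c \<in> formal_sums R A N"
    and S: "finite S" "fst ` fs_support R c \<subseteq> S" "S \<subseteq> carrier A"
  shows "tmap R A h c (b, n) = (\<Oplus>a\<in>{a\<in>S. h a = b}. c (a, n))"
proof -
  have "{a. a \<in> carrier A \<and> h a = b \<and> c (a, n) \<noteq> \<zero>} \<subseteq> {a\<in>S. h a = b}"
    using S(2) by (force simp: fs_support_def)
  then show ?thesis
    unfolding tmap_def using S c
    by (auto intro: add.finprod_mono_neutral_cong_left simp: formal_sums_closed)
qed

lemma tmap_zero: "tmap R A h (\<lambda>p. \<zero>) = (\<lambda>p. \<zero>)"
  by (auto simp: tmap_def)

lemma tmap_formal_sums:
  assumes c: "c \<in> formal_sums R A N" and h: "h \<in> carrier A \<rightarrow> carrier B"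
  shows "tmap R A h c \<in> formal_sums R B N"
proof -
  let ?S = "fst ` fs_support R c" and ?hc = "(\<lambda>(a, n). (h a, n)) ` fs_support R c"
  have S: "finite ?S" "?S \<subseteq> carrier A"
    using c by (auto simp: formal_sums_iff)
  have "tmap R A h c p \<in> carrier R" for p
    by (cases p) (auto simp: tmap_eq_finsum[OF c S(1) _ S(2)] formal_sums_closed[OF c])
  moreover have "fs_support R (tmap R A h c) \<subseteq> ?hc"
  proof
    fix p assume p: "p \<in> fs_support R (tmap R A h c)"
    obtain b n where p_eq: "p = (b, n)" by (cases p)
    have "{a. a \<in> carrier A \<and> h a = b \<and> c (a, n) \<noteq> \<zero>} \<noteq> {}"
      using p p_eq by (auto simp: fs_support_def tmap_def simp del: Collect_empty_eq)
    then show "p \<in> ?hc"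
      using p_eq by (force simp: fs_support_def)
  qed
  moreover have "finite ?hc" "?hc \<subseteq> carrier B \<times> carrier N"
    using c h by (auto simp: formal_sums_iff)
  ultimately show ?thesis
    unfolding formal_sums_iff by (meson finite_subset order_trans)
qed

lemma tmap_add:
  assumes c: "c \<in> formal_sums R A N" and d: "d \<in> formal_sums R A N"
  shows "tmap R A h (fs_add R c d) = fs_add R (tmap R A h c) (tmap R A h d)"
proof (rule ext, clarify)
  fix b n
  let ?S = "fst ` fs_support R c \<union> fst ` fs_support R d"
  have S: "finite ?S" "?S \<subseteq> carrier A"
    using c d by (auto simp: formal_sums_iff)
  have "fs_support R (fs_add R c d) \<subseteq> fs_support R c \<union> fs_support R d"
    by (auto simp: fs_support_def fs_simps)
  then have "fst ` fs_support R (fs_add R c d) \<subseteq> ?S"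
    by blast
  then show "tmap R A h (fs_add R c d) (b, n) = fs_add R (tmap R A h c) (tmap R A h d) (b, n)"
    using S
    by (simp add: tmap_eq_finsum[OF formal_sums_add[OF c d] S(1) _ S(2)]
        tmap_eq_finsum[OF c S(1) _ S(2)] tmap_eq_finsum[OF d S(1) _ S(2)]
        finsum_addf formal_sums_closed[OF c] formal_sums_closed[OF d] Pi_def fs_simps)
qed

lemma tmap_smult:
  assumes c: "c \<in> formal_sums R A N" and r: "r \<in> carrier R"
  shows "tmap R A h (fs_smult R r c) = fs_smult R r (tmap R A h c)"
proof (rule ext, clarify)
  fix b n
  let ?S = "fst ` fs_support R c"
  have S: "finite ?S" "?S \<subseteq> carrier A"
    using c by (auto simp: formal_sums_iff)
  have "fs_support R (fs_smult R r c) \<subseteq> fs_support R c"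
    using r by (auto simp: fs_support_def fs_simps)
  then have "fst ` fs_support R (fs_smult R r c) \<subseteq> ?S"
    by blast
  then show "tmap R A h (fs_smult R r c) (b, n) = fs_smult R r (tmap R A h c) (b, n)"
    using S
    by (simp add: tmap_eq_finsum[OF formal_sums_smult[OF r c] S(1) _ S(2)]
        tmap_eq_finsum[OF c S(1) _ S(2)] finsum_rdistr r formal_sums_closed[OF c] Pi_def fs_simps)
qed

lemma tmap_sub:
  fixes B :: "('a, 'x, 'y) module_scheme"
  assumes c: "c \<in> formal_sums R A N" and d: "d \<in> formal_sums R A N"
    and h: "h \<in> carrier A \<rightarrow> carrier B"
  shows "tmap R A h (fs_sub R c d) = fs_sub R (tmap R A h c) (tmap R A h d)"
proof -
  have sub_eq: "fs_sub R x y = fs_add R x (fs_smult R (\<ominus> \<one>) y)"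
    if "x \<in> formal_sums R X M" "y \<in> formal_sums R X M"
    for x y and X :: "('a, 'p, 'q) module_scheme" and M :: "('a, 'r, 's) module_scheme"
    using that by (auto simp: a_minus_def l_minus formal_sums_closed fs_simps)
  show ?thesis
    using c d tmap_formal_sums[OF c h] tmap_formal_sums[OF d h]
    by (simp add: sub_eq tmap_add formal_sums_smult tmap_smult)
qed

lemma tmap_delta:
  fixes N :: "('a, 'n, 'e) module_scheme"
  assumes a: "a \<in> carrier A" and n: "n \<in> carrier N"
  shows "tmap R A h (delta R (a, n)) = delta R (h a, n)"
proof (rule ext, clarify)
  fix b m
  have "fst ` fs_support R (delta R (a, n)) \<subseteq> {a}"
    by (auto simp: fs_support_def delta_def)
  then have "tmap R A h (delta R (a, n)) (b, m) = (\<Oplus>x\<in>{x\<in>{a}. h x = b}. delta R (a, n) (x, m))"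
    using a by (intro tmap_eq_finsum[OF formal_sums_delta[OF a n]]) auto
  moreover have "{x\<in>{a}. h x = b} = (if h a = b then {a} else {})"
    by auto
  ultimately show "tmap R A h (delta R (a, n)) (b, m) = delta R (h a, n) (b, m)"
    using a by (simp add: delta_def del: Collect_empty_eq)
qed


lemma tmap_delta_sub_sub:
  fixes B :: "('a, 'x, 'y) module_scheme" and N :: "('a, 'n, 'e) module_scheme"
  assumes h: "h \<in> carrier A \<rightarrow> carrier B"
    and a: "x \<in> carrier A" "y \<in> carrier A" "z \<in> carrier A"
    and n: "u \<in> carrier N" "v \<in> carrier N" "w \<in> carrier N"
  shows "tmap R A h (fs_sub R (fs_sub R (delta R (x, u)) (delta R (y, v))) (delta R (z, w))) =
     fs_sub R (fs_sub R (delta R (h x, u)) (delta R (h y, v))) (delta R (h z, w))"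
proof -
  have d: "delta R (x, u) \<in> formal_sums R A N" "delta R (y, v) \<in> formal_sums R A N"
    "delta R (z, w) \<in> formal_sums R A N"
    using a n by (auto intro: formal_sums_delta)
  show ?thesis
    by (simp only: tmap_sub[OF formal_sums_sub[OF d(1,2)] d(3) h] tmap_sub[OF d(1,2) h]
        tmap_delta[OF a(1) n(1)] tmap_delta[OF a(2) n(2)] tmap_delta[OF a(3) n(3)])
qed

lemma tmap_delta_sub_smult:
  fixes B :: "('a, 'x, 'y) module_scheme" and N :: "('a, 'n, 'e) module_scheme"
  assumes h: "h \<in> carrier A \<rightarrow> carrier B" and r: "r \<in> carrier R"
    and a: "x \<in> carrier A" "y \<in> carrier A" and n: "u \<in> carrier N" "v \<in> carrier N"
  shows "tmap R A h (fs_sub R (delta R (x, u)) (fs_smult R r (delta R (y, v)))) =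
     fs_sub R (delta R (h x, u)) (fs_smult R r (delta R (h y, v)))"
proof -
  have d: "delta R (x, u) \<in> formal_sums R A N" "delta R (y, v) \<in> formal_sums R A N"
    using a n by (auto intro: formal_sums_delta)
  show ?thesis
    by (simp only: tmap_sub[OF d(1) formal_sums_smult[OF r d(2)] h] tmap_smult[OF d(2) r]
        tmap_delta[OF a(1) n(1)] tmap_delta[OF a(2) n(2)])
qed

lemma tmap_tensor_rel:
  assumes A: "module R A" and B: "module R B" and N: "module R N" and h: "mod_lin R A B h"
    and c: "c \<in> tensor_rel R A N"
  shows "tmap R A h c \<in> tensor_rel R B N"
proof -
  interpret A: module R A by (rule A)
  interpret B: module R B by (rule B)
  interpret N: module R N by (rule N)
  have h_closed: "h \<in> carrier A \<rightarrow> carrier B"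
    by (rule mod_lin_closed[OF h])
  then have h_in: "a \<in> carrier A \<Longrightarrow> h a \<in> carrier B" for a
    by auto
  have h_add: "\<And>x y. x \<in> carrier A \<Longrightarrow> y \<in> carrier A \<Longrightarrow> h (x \<oplus>\<^bsub>A\<^esub> y) = h x \<oplus>\<^bsub>B\<^esub> h y"
    and h_smult: "\<And>r x. r \<in> carrier R \<Longrightarrow> x \<in> carrier A \<Longrightarrow> h (r \<odot>\<^bsub>A\<^esub> x) = r \<odot>\<^bsub>B\<^esub> h x"
    using h by (auto simp: mod_lin_def)
  from c show ?thesis
  proof induction
    case zero
    then show ?case by (simp add: tmap_zero tensor_rel.zero)
  next
    case (add c d)
    then show ?case
      using tensor_rel_formal_sums[OF A N add.hyps(1)] tensor_rel_formal_sums[OF A N add.hyps(2)]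
      by (simp add: tmap_add tensor_rel.add)
  next
    case (smult r c)
    then show ?case
      using tensor_rel_formal_sums[OF A N smult.hyps(2)] by (simp add: tmap_smult tensor_rel.smult)
  next
    case (lin1 a a' n)
    then show ?case
      using tmap_delta_sub_sub[OF h_closed, where N=N and x="a \<oplus>\<^bsub>A\<^esub> a'" and y=a and z=a' and u=n and v=n and w=n]
      by (simp add: h_add h_in tensor_rel.lin1)
  next
    case (lin2 a n n')
    then show ?case
      using tmap_delta_sub_sub[OF h_closed, where N=N and x=a and y=a and z=a and u="n \<oplus>\<^bsub>N\<^esub> n'" and v=n and w=n']
      by (simp add: h_in tensor_rel.lin2)
  next
    case (lin3 r a n)
    then show ?case
      using tmap_delta_sub_smult[OF h_closed lin3(1), where N=N and x="r \<odot>\<^bsub>A\<^esub> a" and y=a and u=n and v=n]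
      by (simp add: h_smult h_in tensor_rel.lin3)
  next
    case (lin4 r a n)
    then show ?case
      using tmap_delta_sub_smult[OF h_closed lin4(1), where N=N and x=a and y=a and u="r \<odot>\<^bsub>N\<^esub> n" and v=n]
      by (simp add: h_in tensor_rel.lin4)
  qed
qed

lemma tmap_tmap_left_inverse:
  fixes B :: "('a, 'x, 'y) module_scheme"
  assumes c: "c \<in> formal_sums R A N"
    and h: "h \<in> carrier A \<rightarrow> carrier B" and k: "k \<in> carrier B \<rightarrow> carrier A"
    and inverse: "\<And>a. a \<in> fst ` fs_support R c \<Longrightarrow> k (h a) = a"
  shows "tmap R B k (tmap R A h c) = c"
  using c
proof (induction rule: formal_sums_induct)
  case zero
  then show ?case by (simp add: tmap_zero)
next
  case (step d r p)
  obtain a n where p: "p = (a, n)" by (cases p)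
  have an: "a \<in> carrier A" "n \<in> carrier N" and "k (h a) = a"
    using step(2) c p inverse by (force simp: formal_sums_iff)+
  have ha: "h a \<in> carrier B"
    using h an by auto
  have d: "delta R (a, n) \<in> formal_sums R A N" "delta R (h a, n) \<in> formal_sums R B N"
    using an ha by (auto intro: formal_sums_delta)
  have e1: "tmap R A h (fs_add R d (fs_smult R r (delta R p))) =
      fs_add R (tmap R A h d) (fs_smult R r (delta R (h a, n)))"
    unfolding p tmap_add[OF step(1) formal_sums_smult[OF step(3) d(1)]] tmap_smult[OF d(1) step(3)]
      tmap_delta[OF an] ..
  have e2: "tmap R B k (fs_add R (tmap R A h d) (fs_smult R r (delta R (h a, n)))) =
      fs_add R (tmap R B k (tmap R A h d)) (fs_smult R r (delta R (k (h a), n)))"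
    unfolding tmap_add[OF tmap_formal_sums[OF step(1) h] formal_sums_smult[OF step(3) d(2)]]
      tmap_smult[OF d(2) step(3)] tmap_delta[OF ha an(2)] ..
  show ?case
    using e1 e2 step(4) \<open>k (h a) = a\<close> p by simp
qed

text \<open>Tensoring with a locally split monomorphism is injective: finitely many entries of a formal
  sum are fixed by some retraction, which pulls a relation back.\<close>

lemma tensor_rel_reflect_if_locally_split:
  fixes B :: "('a, 'x, 'y) module_scheme"
  assumes A: "module R A" and B: "module R B" and N: "module R N" and f: "mod_lin R A B f"
    and split: "\<And>X. finite X \<Longrightarrow> X \<subseteq> carrier A \<Longrightarrow> \<exists>k. mod_lin R B A k \<and> (\<forall>a\<in>X. k (f a) = a)"
    and c: "c \<in> formal_sums R A N" and rel: "tmap R A f c \<in> tensor_rel R B N"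
  shows "c \<in> tensor_rel R A N"
proof -
  have "finite (fst ` fs_support R c)" "fst ` fs_support R c \<subseteq> carrier A"
    using c by (auto simp: formal_sums_iff)
  then obtain k where k: "mod_lin R B A k" "\<forall>a\<in>fst ` fs_support R c. k (f a) = a"
    using split by blast
  have "tmap R B k (tmap R A f c) = c"
    using k f by (intro tmap_tmap_left_inverse[OF c]) (auto simp: mod_lin_def)
  with tmap_tensor_rel[OF B A N k(1) rel] show ?thesis
    by simp
qed

definition section_of :: "('b \<Rightarrow> 'c) \<Rightarrow> 'b set \<Rightarrow> 'c \<Rightarrow> 'b" where
  "section_of g S z = (SOME b. b \<in> S \<and> g b = z)"

lemma section_of:
  assumes "g ` S = T" "z \<in> T"
  shows "section_of g S z \<in> S" "g (section_of g S z) = z"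
  using someI_ex[of "\<lambda>b. b \<in> S \<and> g b = z"] assms by (auto simp: section_of_def)

lemma tensor_surj:
  fixes C :: "('a, 'x, 'y) module_scheme"
  assumes g: "g \<in> carrier B \<rightarrow> carrier C" and onto: "g ` carrier B = carrier C"
    and c: "c \<in> formal_sums R C N"
  shows "\<exists>d\<in>formal_sums R B N. fs_sub R c (tmap R B g d) \<in> tensor_rel R C N"
proof -
  let ?s = "section_of g (carrier B)"
  have s: "?s \<in> carrier C \<rightarrow> carrier B"
    using section_of[OF onto] by auto
  have "tmap R B g (tmap R C ?s c) = c"
    using c section_of[OF onto] by (intro tmap_tmap_left_inverse[OF c s g]) (auto simp: formal_sums_iff)
  moreover have "fs_sub R c c = (\<lambda>p. \<zero>)"
    using formal_sums_closed[OF c] by (auto simp: fs_simps a_minus_def r_neg)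
  ultimately show ?thesis
    by (intro bexI[of _ "tmap R C ?s c"] tmap_formal_sums[OF c s]) (simp_all add: tensor_rel.zero)
qed

end

section \<open>Right exactness and purity\<close>

locale right_exact_tensor = cring_modules R +
  A: module R A + B: module R B + C: module R C + N: module R N
  for R :: "'a ring" (structure) and A :: "('a, 'b, 'c) module_scheme" and B :: "('a, 'x, 'y) module_scheme"
    and C :: "('a, 'u, 'v) module_scheme" and N :: "('a, 'n, 'e) module_scheme" +
  fixes f g
  assumes f: "mod_lin R A B f" and g: "mod_lin R B C g" and g_onto: "g ` carrier B = carrier C"
    and ker_g: "\<And>b. b \<in> carrier B \<Longrightarrow> g b = \<zero>\<^bsub>C\<^esub> \<Longrightarrow> b \<in> f ` carrier A"
begin

definition congruent_to_image :: "('x \<times> 'n \<Rightarrow> 'a) set" where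
  "congruent_to_image = {x \<in> formal_sums R B N.
     \<exists>d\<in>formal_sums R A N. fs_sub R x (tmap R A f d) \<in> tensor_rel R B N}"

lemma congruent_to_imageE:
  assumes "x \<in> congruent_to_image"
  obtains d where "x \<in> formal_sums R B N" "d \<in> formal_sums R A N"
    "fs_sub R x (tmap R A f d) \<in> tensor_rel R B N"
  using assms by (auto simp: congruent_to_image_def)

lemma congruent_to_image_if_tensor_rel:
  assumes x: "x \<in> tensor_rel R B N"
  shows "x \<in> congruent_to_image"
proof -
  have x_fs: "x \<in> formal_sums R B N"
    by (rule tensor_rel_formal_sums[OF B.module_axioms N.module_axioms x])
  then have "fs_sub R x (tmap R A f (\<lambda>p. \<zero>)) = x"
    by (auto simp: tmap_zero fs_simps a_minus_def formal_sums_closed)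
  then show ?thesis
    unfolding congruent_to_image_def using x_fs x formal_sums_zero[of A N] by force
qed

lemma congruent_to_image_add:
  assumes "x \<in> congruent_to_image" "y \<in> congruent_to_image"
  shows "fs_add R x y \<in> congruent_to_image"
proof -
  have f_closed: "f \<in> carrier A \<rightarrow> carrier B"
    by (rule mod_lin_closed[OF f])
  obtain d e where x: "x \<in> formal_sums R B N" "d \<in> formal_sums R A N"
      "fs_sub R x (tmap R A f d) \<in> tensor_rel R B N"
    and y: "y \<in> formal_sums R B N" "e \<in> formal_sums R A N"
      "fs_sub R y (tmap R A f e) \<in> tensor_rel R B N"
    using assms by (metis congruent_to_imageE)
  have "fs_sub R (fs_add R x y) (tmap R A f (fs_add R d e)) =
      fs_add R (fs_sub R x (tmap R A f d)) (fs_sub R y (tmap R A f e))"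
    unfolding tmap_add[OF x(2) y(2)]
    by (rule ext) (simp add: fs_simps a_add_minus_add formal_sums_closed[OF x(1)]
        formal_sums_closed[OF y(1)] formal_sums_closed[OF tmap_formal_sums[OF x(2) f_closed]]
        formal_sums_closed[OF tmap_formal_sums[OF y(2) f_closed]])
  then show ?thesis
    unfolding congruent_to_image_def
    using formal_sums_add[OF x(1) y(1)] formal_sums_add[OF x(2) y(2)] tensor_rel.add[OF x(3) y(3)]
    by force
qed

lemma congruent_to_image_smult:
  assumes r: "r \<in> carrier R" and "x \<in> congruent_to_image"
  shows "fs_smult R r x \<in> congruent_to_image"
proof -
  obtain d where x: "x \<in> formal_sums R B N" "d \<in> formal_sums R A N"
      "fs_sub R x (tmap R A f d) \<in> tensor_rel R B N"
    using assms(2) by (rule congruent_to_imageE)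
  have "fs_sub R (fs_smult R r x) (tmap R A f (fs_smult R r d)) =
      fs_smult R r (fs_sub R x (tmap R A f d))"
    unfolding tmap_smult[OF x(2) r]
    by (rule ext) (simp add: fs_simps r_diff_distr r formal_sums_closed[OF x(1)]
        formal_sums_closed[OF tmap_formal_sums[OF x(2) mod_lin_closed[OF f]]])
  then show ?thesis
    unfolding congruent_to_image_def
    using formal_sums_smult[OF r x(1)] formal_sums_smult[OF r x(2)] tensor_rel.smult[OF r x(3)]
    by force
qed

text \<open>The only new relations in \<open>C \<otimes> N\<close> identify elements of a fibre of \<open>g\<close>; their
  differences come from \<open>A \<otimes> N\<close> by exactness at \<open>B\<close>.\<close>

lemma congruent_to_image_fibre_diff:
  assumes b: "b \<in> carrier B" "b' \<in> carrier B" "g b = g b'" and n: "n \<in> carrier N"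
  shows "fs_sub R (delta R (b, n)) (delta R (b', n)) \<in> congruent_to_image"
proof -
  have "g (b \<ominus>\<^bsub>B\<^esub> b') = g b \<ominus>\<^bsub>C\<^esub> g b'"
    by (rule mod_lin_minus[OF B.module_axioms C.module_axioms g b(1,2)])
  also have "\<dots> = \<zero>\<^bsub>C\<^esub>"
    using b mod_lin_closed[OF g] by (simp add: C.a_minus_self Pi_iff)
  finally obtain a where a: "a \<in> carrier A" "b \<ominus>\<^bsub>B\<^esub> b' = f a"
    using ker_g b by (metis B.minus_closed imageE)
  have fa: "f a \<in> carrier B"
    using mod_lin_closed[OF f] a by auto
  have b_eq: "b = f a \<oplus>\<^bsub>B\<^esub> b'"
    using a(2)[symmetric] b by (simp add: B.a_minus_add_cancel)
  have "fs_sub R (fs_sub R (delta R (b, n)) (delta R (b', n))) (tmap R A f (delta R (a, n))) =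
      fs_sub R (fs_sub R (delta R (f a \<oplus>\<^bsub>B\<^esub> b', n)) (delta R (f a, n))) (delta R (b', n))"
    unfolding tmap_delta[OF a(1) n] b_eq[symmetric]
    by (rule ext) (simp add: fs_simps a_minus_minus_commute delta_def)
  moreover have "\<dots> \<in> tensor_rel R B N"
    by (rule tensor_rel.lin1[OF fa b(2) n])
  ultimately show ?thesis
    unfolding congruent_to_image_def
    using formal_sums_sub[OF formal_sums_delta[OF b(1) n] formal_sums_delta[OF b(2) n]]
      formal_sums_delta[OF a(1) n]
    by force
qed

abbreviation section_g :: "'u \<Rightarrow> 'x" where
  "section_g \<equiv> section_of g (carrier B)"

lemma section_g: "z \<in> carrier C \<Longrightarrow> section_g z \<in> carrier B"
  "z \<in> carrier C \<Longrightarrow> g (section_g z) = z"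
  using section_of[OF g_onto] by auto

lemma fs_sub_sub_split:
  assumes "\<And>p. X p \<in> carrier R" "\<And>p. Y p \<in> carrier R" "\<And>p. Z p \<in> carrier R"
    "\<And>p. S p \<in> carrier R"
  shows "fs_sub R (fs_sub R X Y) Z = fs_add R (fs_sub R X S) (fs_sub R (fs_sub R S Y) Z)"
proof (rule ext)
  fix p
  have "X p \<in> carrier R" "Y p \<in> carrier R" "Z p \<in> carrier R" "S p \<in> carrier R"
    using assms by auto
  then show "fs_sub R (fs_sub R X Y) Z p = fs_add R (fs_sub R X S) (fs_sub R (fs_sub R S Y) Z) p"
    unfolding fs_simps by algebra
qed

lemma fs_sub_split:
  assumes "\<And>p. X p \<in> carrier R" "\<And>p. Y p \<in> carrier R" "\<And>p. S p \<in> carrier R"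
  shows "fs_sub R X Y = fs_add R (fs_sub R X S) (fs_sub R S Y)"
  by (rule ext) (unfold fs_simps, rule a_minus_telescope, use assms in auto)

lemma tmap_section_add_relation:
  assumes z: "z \<in> carrier C" "z' \<in> carrier C" and n: "n \<in> carrier N"
  shows "tmap R C section_g
      (fs_sub R (fs_sub R (delta R (z \<oplus>\<^bsub>C\<^esub> z', n)) (delta R (z, n))) (delta R (z', n)))
    \<in> congruent_to_image"
proof -
  let ?s = "section_g z \<oplus>\<^bsub>B\<^esub> section_g z'"
  have s: "section_g z \<in> carrier B" "section_g z' \<in> carrier B"
    "section_g (z \<oplus>\<^bsub>C\<^esub> z') \<in> carrier B" "?s \<in> carrier B"
    using section_g z n by auto
  have "g (section_g (z \<oplus>\<^bsub>C\<^esub> z')) = g ?s"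
    using section_g z n s g by (simp add: mod_lin_def)
  then have D: "fs_sub R (delta R (section_g (z \<oplus>\<^bsub>C\<^esub> z'), n)) (delta R (?s, n))
      \<in> congruent_to_image"
    using congruent_to_image_fibre_diff s z n by blast
  have L: "fs_sub R (fs_sub R (delta R (?s, n)) (delta R (section_g z, n))) (delta R (section_g z', n))
      \<in> congruent_to_image"
    using s z n by (intro congruent_to_image_if_tensor_rel tensor_rel.lin1) auto
  have "tmap R C section_g
      (fs_sub R (fs_sub R (delta R (z \<oplus>\<^bsub>C\<^esub> z', n)) (delta R (z, n))) (delta R (z', n)))
    = fs_sub R (fs_sub R (delta R (section_g (z \<oplus>\<^bsub>C\<^esub> z'), n)) (delta R (section_g z, n)))
        (delta R (section_g z', n))"
    using section_g z n by (intro tmap_delta_sub_sub) auto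
  also have "\<dots> = fs_add R (fs_sub R (delta R (section_g (z \<oplus>\<^bsub>C\<^esub> z'), n)) (delta R (?s, n)))
       (fs_sub R (fs_sub R (delta R (?s, n)) (delta R (section_g z, n))) (delta R (section_g z', n)))"
    by (rule fs_sub_sub_split) (simp_all add: delta_closed)
  finally show ?thesis
    using congruent_to_image_add[OF D L] by simp
qed

lemma tmap_section_smult_relation:
  assumes r: "r \<in> carrier R" and z: "z \<in> carrier C" and n: "n \<in> carrier N"
  shows "tmap R C section_g (fs_sub R (delta R (r \<odot>\<^bsub>C\<^esub> z, n)) (fs_smult R r (delta R (z, n))))
    \<in> congruent_to_image"
proof -
  let ?s = "r \<odot>\<^bsub>B\<^esub> section_g z"
  have s: "section_g z \<in> carrier B" "section_g (r \<odot>\<^bsub>C\<^esub> z) \<in> carrier B" "?s \<in> carrier B"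
    using section_g r z n by auto
  have "g (section_g (r \<odot>\<^bsub>C\<^esub> z)) = g ?s"
    using section_g r z n s g by (simp add: mod_lin_def)
  then have D: "fs_sub R (delta R (section_g (r \<odot>\<^bsub>C\<^esub> z), n)) (delta R (?s, n))
      \<in> congruent_to_image"
    using congruent_to_image_fibre_diff s r z n by blast
  have L: "fs_sub R (delta R (?s, n)) (fs_smult R r (delta R (section_g z, n))) \<in> congruent_to_image"
    using s r z n by (intro congruent_to_image_if_tensor_rel tensor_rel.lin3) auto
  have "tmap R C section_g (fs_sub R (delta R (r \<odot>\<^bsub>C\<^esub> z, n)) (fs_smult R r (delta R (z, n))))
    = fs_sub R (delta R (section_g (r \<odot>\<^bsub>C\<^esub> z), n)) (fs_smult R r (delta R (section_g z, n)))"
    using section_g r z n by (intro tmap_delta_sub_smult) auto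
  also have "\<dots> = fs_add R (fs_sub R (delta R (section_g (r \<odot>\<^bsub>C\<^esub> z), n)) (delta R (?s, n)))
       (fs_sub R (delta R (?s, n)) (fs_smult R r (delta R (section_g z, n))))"
    by (rule fs_sub_split) (simp_all add: delta_closed fs_simps r z n)
  finally show ?thesis
    using congruent_to_image_add[OF D L] by simp
qed

lemma tmap_section_tensor_rel:
  assumes "x \<in> tensor_rel R C N"
  shows "tmap R C section_g x \<in> congruent_to_image"
  using assms
proof induction
  case zero
  then show ?case
    using congruent_to_image_if_tensor_rel[OF tensor_rel.zero] by (simp add: tmap_zero)
next
  case (add c d)
  then show ?case
    using congruent_to_image_add tensor_rel_formal_sums[OF C.module_axioms N.module_axioms add.hyps(1)]
      tensor_rel_formal_sums[OF C.module_axioms N.module_axioms add.hyps(2)]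
    by (simp add: tmap_add)
next
  case (smult r c)
  then show ?case
    using congruent_to_image_smult tensor_rel_formal_sums[OF C.module_axioms N.module_axioms smult.hyps(2)]
    by (simp add: tmap_smult)
next
  case (lin1 z z' n)
  then show ?case
    by (rule tmap_section_add_relation)
next
  case (lin2 z n n')
  have "tmap R C section_g
      (fs_sub R (fs_sub R (delta R (z, n \<oplus>\<^bsub>N\<^esub> n')) (delta R (z, n))) (delta R (z, n')))
    = fs_sub R (fs_sub R (delta R (section_g z, n \<oplus>\<^bsub>N\<^esub> n')) (delta R (section_g z, n)))
        (delta R (section_g z, n'))"
    using section_g lin2 by (intro tmap_delta_sub_sub) auto
  then show ?case
    using congruent_to_image_if_tensor_rel[OF tensor_rel.lin2, of "section_g z" n n'] section_g lin2
    by simp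
next
  case (lin3 r z n)
  then show ?case
    by (rule tmap_section_smult_relation)
next
  case (lin4 r z n)
  have "tmap R C section_g (fs_sub R (delta R (z, r \<odot>\<^bsub>N\<^esub> n)) (fs_smult R r (delta R (z, n))))
    = fs_sub R (delta R (section_g z, r \<odot>\<^bsub>N\<^esub> n)) (fs_smult R r (delta R (section_g z, n)))"
    using section_g lin4 by (intro tmap_delta_sub_smult) auto
  then show ?case
    using congruent_to_image_if_tensor_rel[OF tensor_rel.lin4, of r "section_g z" n] section_g lin4
    by simp
qed

lemma fs_sub_tmap_section_congruent:
  assumes c: "c \<in> formal_sums R B N"
  shows "fs_sub R c (tmap R C section_g (tmap R B g c)) \<in> congruent_to_image"
  using c
proof (induction rule: formal_sums_induct)
  case zero
  have "fs_sub R (\<lambda>p::'x \<times> 'n. \<zero>) (tmap R C section_g (tmap R B g (\<lambda>p. \<zero>))) = (\<lambda>p. \<zero>)"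
    by (rule ext) (simp add: tmap_zero fs_simps a_minus_self)
  then show ?case
    using congruent_to_image_if_tensor_rel[OF tensor_rel.zero] by simp
next
  case (step d r p)
  obtain b n where p: "p = (b, n)" by (cases p)
  have bn: "b \<in> carrier B" "n \<in> carrier N"
    using step(2) c p by (auto simp: formal_sums_iff)
  have g_closed: "g \<in> carrier B \<rightarrow> carrier C" and s_closed: "section_g \<in> carrier C \<rightarrow> carrier B"
    using mod_lin_closed[OF g] section_g by auto
  have gb: "g b \<in> carrier C" and sgb: "section_g (g b) \<in> carrier B" "g (section_g (g b)) = g b"
    using g_closed bn section_g by auto
  have dl: "delta R (b, n) \<in> formal_sums R B N" "delta R (g b, n) \<in> formal_sums R C N"
    "delta R (section_g (g b), n) \<in> formal_sums R B N"
    using bn gb sgb by (auto intro: formal_sums_delta)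
  have dd: "tmap R C section_g (tmap R B g d) \<in> formal_sums R B N"
    by (rule tmap_formal_sums[OF tmap_formal_sums[OF step(1) g_closed] s_closed])
  have e1: "tmap R B g (fs_add R d (fs_smult R r (delta R (b, n)))) =
      fs_add R (tmap R B g d) (fs_smult R r (delta R (g b, n)))"
    unfolding tmap_add[OF step(1) formal_sums_smult[OF step(3) dl(1)]] tmap_smult[OF dl(1) step(3)]
      tmap_delta[OF bn] ..
  have e2: "tmap R C section_g (fs_add R (tmap R B g d) (fs_smult R r (delta R (g b, n)))) =
      fs_add R (tmap R C section_g (tmap R B g d)) (fs_smult R r (delta R (section_g (g b), n)))"
    unfolding tmap_add[OF tmap_formal_sums[OF step(1) g_closed] formal_sums_smult[OF step(3) dl(2)]]
      tmap_smult[OF dl(2) step(3)] tmap_delta[OF gb bn(2)] ..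
  have "fs_sub R (fs_add R d (fs_smult R r (delta R (b, n))))
      (tmap R C section_g (tmap R B g (fs_add R d (fs_smult R r (delta R (b, n))))))
    = fs_add R (fs_sub R d (tmap R C section_g (tmap R B g d)))
        (fs_smult R r (fs_sub R (delta R (b, n)) (delta R (section_g (g b), n))))"
    unfolding e1 e2
    by (rule ext) (simp add: fs_simps a_add_minus_add r_diff_distr step(3) formal_sums_closed[OF step(1)]
        formal_sums_closed[OF dd] formal_sums_closed[OF dl(1)] formal_sums_closed[OF dl(3)])
  moreover have "fs_sub R (delta R (b, n)) (delta R (section_g (g b), n)) \<in> congruent_to_image"
    using bn sgb by (intro congruent_to_image_fibre_diff) auto
  ultimately show ?case
    using congruent_to_image_add[OF step(4) congruent_to_image_smult[OF step(3)]] p by simp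
qed

text \<open>Exactness of \<open>A \<otimes> N \<rightarrow> B \<otimes> N \<rightarrow> C \<otimes> N\<close> in the middle: lifting along a set-theoretic
  section of \<open>g\<close> splits \<open>c\<close> into a part congruent to \<open>c\<close>'s lift and the lift of a relation.\<close>

lemma tensor_exact_middle:
  assumes c: "c \<in> formal_sums R B N" and rel: "tmap R B g c \<in> tensor_rel R C N"
  shows "\<exists>d\<in>formal_sums R A N. fs_sub R c (tmap R A f d) \<in> tensor_rel R B N"
proof -
  let ?lift = "tmap R C section_g (tmap R B g c)"
  have g_closed: "g \<in> carrier B \<rightarrow> carrier C" and s_closed: "section_g \<in> carrier C \<rightarrow> carrier B"
    using mod_lin_closed[OF g] section_g by auto
  have "fs_add R (fs_sub R c ?lift) ?lift = c"
    by (rule ext) (simp add: fs_simps a_minus_add_cancel formal_sums_closed[OF c]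
        formal_sums_closed[OF tmap_formal_sums[OF tmap_formal_sums[OF c g_closed] s_closed]])
  then have "c \<in> congruent_to_image"
    using congruent_to_image_add[OF fs_sub_tmap_section_congruent[OF c] tmap_section_tensor_rel[OF rel]]
    by simp
  then show ?thesis
    by (auto simp: congruent_to_image_def)
qed

end

lemma pure_exact_if_locally_split:
  fixes A B C :: "('a, 'b) module"
  assumes R: "cring R" and A: "module R A" and B: "module R B" and C: "module R C"
    and f: "mod_lin R A B f" and g: "mod_lin R B C g"
    and f_inj: "inj_on f (carrier A)" and g_onto: "g ` carrier B = carrier C"
    and ker_g: "{b \<in> carrier B. g b = \<zero>\<^bsub>C\<^esub>} = f ` carrier A"
    and split: "\<And>X. finite X \<Longrightarrow> X \<subseteq> carrier A \<Longrightarrow> \<exists>k. mod_lin R B A k \<and> (\<forall>a\<in>X. k (f a) = a)"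
  shows "pure_exact R A f B g C"
  unfolding pure_exact_def
proof (intro conjI allI impI ballI)
  interpret cring_modules R by (rule cring_modules.intro[OF R])
  fix N :: "('a, 'b) module"
  assume N: "module R N"
  have "right_exact_tensor R A B C N f g"
    unfolding right_exact_tensor_def right_exact_tensor_axioms_def cring_modules_def
    using R A B C N f g g_onto ker_g by blast
  then interpret right_exact_tensor R A B C N f g .
  show "c \<in> tensor_rel R A N" if "c \<in> formal_sums R A N" "tmap R A f c \<in> tensor_rel R B N" for c
    using tensor_rel_reflect_if_locally_split[OF A B N f split that] by blast
  show "\<exists>d\<in>formal_sums R A N. fs_sub R c (tmap R A f d) \<in> tensor_rel R B N"
    if "c \<in> formal_sums R B N" "tmap R B g c \<in> tensor_rel R C N" for c
    by (rule tensor_exact_middle[OF that])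
  show "\<exists>d\<in>formal_sums R B N. fs_sub R c (tmap R B g d) \<in> tensor_rel R C N"
    if "c \<in> formal_sums R C N" for c
    by (rule tensor_surj[OF mod_lin_closed[OF g] g_onto that])
qed (use A B C f g f_inj g_onto ker_g in simp_all)

section \<open>Quotient modules\<close>

text \<open>Cosets are encoded as sets of singletons, so that quotients of a module with carrier type
  \<open>'v\<close> have carrier type \<open>'v set set\<close>, the type of the modules in the theorem.\<close>

definition quot_class :: "('a, 'v) module \<Rightarrow> 'v set \<Rightarrow> 'v \<Rightarrow> 'v set set" where
  "quot_class V W x = (\<lambda>y. {y}) ` {y \<in> carrier V. y \<ominus>\<^bsub>V\<^esub> x \<in> W}"

definition quot_rep :: "('a, 'v) module \<Rightarrow> 'v set \<Rightarrow> 'v set set \<Rightarrow> 'v" where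
  "quot_rep V W X = (SOME x. x \<in> carrier V \<and> quot_class V W x = X)"

definition quot_module :: "('a, 'v) module \<Rightarrow> 'v set \<Rightarrow> ('a, 'v set set) module" where
  "quot_module V W = \<lparr>carrier = quot_class V W ` carrier V, mult = undefined, one = undefined,
     zero = quot_class V W \<zero>\<^bsub>V\<^esub>,
     add = \<lambda>X Y. quot_class V W (quot_rep V W X \<oplus>\<^bsub>V\<^esub> quot_rep V W Y),
     smult = \<lambda>r X. quot_class V W (r \<odot>\<^bsub>V\<^esub> quot_rep V W X)\<rparr>"

locale quotient_module = module R V for R :: "'a ring" (structure) and V :: "('a, 'v) module" +
  fixes W
  assumes submodule: "submodule W R V"
begin

lemma W_zero: "\<zero>\<^bsub>V\<^esub> \<in> W"
  and W_add: "x \<in> W \<Longrightarrow> y \<in> W \<Longrightarrow> x \<oplus>\<^bsub>V\<^esub> y \<in> W"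
  and W_smult: "r \<in> carrier R \<Longrightarrow> x \<in> W \<Longrightarrow> r \<odot>\<^bsub>V\<^esub> x \<in> W"
  and W_neg: "x \<in> W \<Longrightarrow> \<ominus>\<^bsub>V\<^esub> x \<in> W"
  using submoduleE[OF submodule] subgroup.one_closed[OF submodule.axioms(1)[OF submodule]]
  by auto

lemma quot_class_eq_iff:
  assumes x: "x \<in> carrier V" and y: "y \<in> carrier V"
  shows "quot_class V W x = quot_class V W y \<longleftrightarrow> x \<ominus>\<^bsub>V\<^esub> y \<in> W"
proof -
  have "quot_class V W x = quot_class V W y \<longleftrightarrow>
      {z \<in> carrier V. z \<ominus>\<^bsub>V\<^esub> x \<in> W} = {z \<in> carrier V. z \<ominus>\<^bsub>V\<^esub> y \<in> W}"
    unfolding quot_class_def by (rule inj_image_eq_iff) (auto intro: inj_onI)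
  also have "\<dots> \<longleftrightarrow> x \<ominus>\<^bsub>V\<^esub> y \<in> W"
  proof
    assume "{z \<in> carrier V. z \<ominus>\<^bsub>V\<^esub> x \<in> W} = {z \<in> carrier V. z \<ominus>\<^bsub>V\<^esub> y \<in> W}"
    moreover have "x \<in> {z \<in> carrier V. z \<ominus>\<^bsub>V\<^esub> x \<in> W}"
      using x W_zero by (simp add: a_minus_self)
    ultimately show "x \<ominus>\<^bsub>V\<^esub> y \<in> W"
      by auto
  next
    assume xy: "x \<ominus>\<^bsub>V\<^esub> y \<in> W"
    then have yx: "y \<ominus>\<^bsub>V\<^esub> x \<in> W"
      using W_neg[OF xy] x y by (simp add: a_minus_minus_swap)
    show "{z \<in> carrier V. z \<ominus>\<^bsub>V\<^esub> x \<in> W} = {z \<in> carrier V. z \<ominus>\<^bsub>V\<^esub> y \<in> W}"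
    proof (intro Collect_cong conj_cong refl iffI)
      fix z
      assume z: "z \<in> carrier V"
      show "z \<ominus>\<^bsub>V\<^esub> y \<in> W" if "z \<ominus>\<^bsub>V\<^esub> x \<in> W"
        using W_add[OF that xy] a_minus_telescope[OF z x y] by simp
      show "z \<ominus>\<^bsub>V\<^esub> x \<in> W" if "z \<ominus>\<^bsub>V\<^esub> y \<in> W"
        using W_add[OF that yx] a_minus_telescope[OF z y x] by simp
    qed
  qed
  finally show ?thesis .
qed

lemma quot_rep:
  assumes x: "x \<in> carrier V"
  shows "quot_rep V W (quot_class V W x) \<in> carrier V"
    and "quot_rep V W (quot_class V W x) \<ominus>\<^bsub>V\<^esub> x \<in> W"
proof -
  have "\<exists>y. y \<in> carrier V \<and> quot_class V W y = quot_class V W x"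
    using x by auto
  then have "quot_rep V W (quot_class V W x) \<in> carrier V \<and>
      quot_class V W (quot_rep V W (quot_class V W x)) = quot_class V W x"
    unfolding quot_rep_def by (rule someI_ex)
  then show "quot_rep V W (quot_class V W x) \<in> carrier V"
    and "quot_rep V W (quot_class V W x) \<ominus>\<^bsub>V\<^esub> x \<in> W"
    using quot_class_eq_iff x by auto
qed

lemma quot_carrier: "carrier (quot_module V W) = quot_class V W ` carrier V"
  by (simp add: quot_module_def)

lemma quot_zero: "\<zero>\<^bsub>quot_module V W\<^esub> = quot_class V W \<zero>\<^bsub>V\<^esub>"
  by (simp add: quot_module_def)

lemma quot_add:
  assumes x: "x \<in> carrier V" and y: "y \<in> carrier V"
  shows "quot_class V W x \<oplus>\<^bsub>quot_module V W\<^esub> quot_class V W y = quot_class V W (x \<oplus>\<^bsub>V\<^esub> y)"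
proof -
  let ?x = "quot_rep V W (quot_class V W x)" and ?y = "quot_rep V W (quot_class V W y)"
  have "(?x \<oplus>\<^bsub>V\<^esub> ?y) \<ominus>\<^bsub>V\<^esub> (x \<oplus>\<^bsub>V\<^esub> y) = (?x \<ominus>\<^bsub>V\<^esub> x) \<oplus>\<^bsub>V\<^esub> (?y \<ominus>\<^bsub>V\<^esub> y)"
    using quot_rep x y by (simp add: a_add_minus_add)
  also have "\<dots> \<in> W"
    using quot_rep x y by (intro W_add) auto
  finally show ?thesis
    using quot_rep x y by (simp add: quot_module_def quot_class_eq_iff)
qed

lemma quot_smult:
  assumes r: "r \<in> carrier R" and x: "x \<in> carrier V"
  shows "r \<odot>\<^bsub>quot_module V W\<^esub> quot_class V W x = quot_class V W (r \<odot>\<^bsub>V\<^esub> x)"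
proof -
  let ?x = "quot_rep V W (quot_class V W x)"
  have "(r \<odot>\<^bsub>V\<^esub> ?x) \<ominus>\<^bsub>V\<^esub> (r \<odot>\<^bsub>V\<^esub> x) = r \<odot>\<^bsub>V\<^esub> (?x \<ominus>\<^bsub>V\<^esub> x)"
    using quot_rep r x by (simp add: smult_minus_distr)
  also have "\<dots> \<in> W"
    using quot_rep r x by (intro W_smult) auto
  finally show ?thesis
    using quot_rep r x by (simp add: quot_module_def quot_class_eq_iff)
qed

lemma quot_class_eq_zero_iff:
  "x \<in> carrier V \<Longrightarrow> quot_class V W x = \<zero>\<^bsub>quot_module V W\<^esub> \<longleftrightarrow> x \<in> W"
  by (simp add: quot_zero quot_class_eq_iff a_minus_zero)

lemma quot_module: "module R (quot_module V W)"
proof (rule moduleI)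
  show "abelian_group (quot_module V W)"
  proof (rule abelian_groupI)
    fix X Y Z
    assume "X \<in> carrier (quot_module V W)" "Y \<in> carrier (quot_module V W)"
      "Z \<in> carrier (quot_module V W)"
    then obtain x y z where "x \<in> carrier V" "y \<in> carrier V" "z \<in> carrier V"
      "X = quot_class V W x" "Y = quot_class V W y" "Z = quot_class V W z"
      by (auto simp: quot_carrier)
    then show "X \<oplus>\<^bsub>quot_module V W\<^esub> Y \<in> carrier (quot_module V W)"
      and "X \<oplus>\<^bsub>quot_module V W\<^esub> Y \<oplus>\<^bsub>quot_module V W\<^esub> Z =
        X \<oplus>\<^bsub>quot_module V W\<^esub> (Y \<oplus>\<^bsub>quot_module V W\<^esub> Z)"
      and "X \<oplus>\<^bsub>quot_module V W\<^esub> Y = Y \<oplus>\<^bsub>quot_module V W\<^esub> X"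
      by (simp_all add: quot_add quot_carrier, simp add: a_assoc, simp add: a_comm)
  next
    fix X
    assume "X \<in> carrier (quot_module V W)"
    then obtain x where x: "x \<in> carrier V" "X = quot_class V W x"
      by (auto simp: quot_carrier)
    then show "\<zero>\<^bsub>quot_module V W\<^esub> \<oplus>\<^bsub>quot_module V W\<^esub> X = X"
      by (simp add: quot_zero quot_add)
    show "\<exists>Y\<in>carrier (quot_module V W). Y \<oplus>\<^bsub>quot_module V W\<^esub> X = \<zero>\<^bsub>quot_module V W\<^esub>"
      using x by (intro bexI[of _ "quot_class V W (\<ominus>\<^bsub>V\<^esub> x)"])
        (auto simp: quot_zero quot_add quot_carrier l_neg)
  qed (simp add: quot_zero quot_carrier)
next
  fix a X
  assume "a \<in> carrier R" "X \<in> carrier (quot_module V W)"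
  then show "a \<odot>\<^bsub>quot_module V W\<^esub> X \<in> carrier (quot_module V W)"
    by (auto simp: quot_carrier quot_smult)
next
  fix a b X
  assume "a \<in> carrier R" "b \<in> carrier R" "X \<in> carrier (quot_module V W)"
  then show "(a \<oplus> b) \<odot>\<^bsub>quot_module V W\<^esub> X =
      a \<odot>\<^bsub>quot_module V W\<^esub> X \<oplus>\<^bsub>quot_module V W\<^esub> b \<odot>\<^bsub>quot_module V W\<^esub> X"
    and "(a \<otimes> b) \<odot>\<^bsub>quot_module V W\<^esub> X = a \<odot>\<^bsub>quot_module V W\<^esub> (b \<odot>\<^bsub>quot_module V W\<^esub> X)"
    by (auto simp: quot_carrier quot_smult quot_add smult_l_distr smult_assoc1)
next
  fix a X Y
  assume "a \<in> carrier R" "X \<in> carrier (quot_module V W)" "Y \<in> carrier (quot_module V W)"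
  then show "a \<odot>\<^bsub>quot_module V W\<^esub> (X \<oplus>\<^bsub>quot_module V W\<^esub> Y) =
      a \<odot>\<^bsub>quot_module V W\<^esub> X \<oplus>\<^bsub>quot_module V W\<^esub> a \<odot>\<^bsub>quot_module V W\<^esub> Y"
    by (auto simp: quot_carrier quot_smult quot_add smult_r_distr)
next
  fix X
  assume "X \<in> carrier (quot_module V W)"
  then show "\<one> \<odot>\<^bsub>quot_module V W\<^esub> X = X"
    by (auto simp: quot_carrier quot_smult)
qed (rule is_cring)

end

section \<open>Finitely supported sequences\<close>

definition fin_seqs :: "'a ring \<Rightarrow> ('a, nat \<Rightarrow> 'a) module" where
  "fin_seqs R = \<lparr>carrier = {x. (\<forall>i. x i \<in> carrier R) \<and> finite {i. x i \<noteq> \<zero>\<^bsub>R\<^esub>}},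
     mult = undefined, one = undefined, zero = (\<lambda>i. \<zero>\<^bsub>R\<^esub>),
     add = (\<lambda>x y i. x i \<oplus>\<^bsub>R\<^esub> y i), smult = (\<lambda>r x i. r \<otimes>\<^bsub>R\<^esub> x i)\<rparr>"

definition vanishes_above :: "'a ring \<Rightarrow> nat \<Rightarrow> (nat \<Rightarrow> 'a) \<Rightarrow> bool" where
  "vanishes_above R M x \<longleftrightarrow> (\<forall>i>M. x i = \<zero>\<^bsub>R\<^esub>)"

text \<open>\<open>scaled_eval R a M x = a\<^sup>M \<cdot> \<Sum>\<^sub>i x\<^sub>i a\<^sup>-\<^sup>i\<close>: the image of \<open>x\<close> under
  \<open>e\<^sub>i \<mapsto> a\<^sup>-\<^sup>i\<close>, with denominators cleared.\<close>

definition scaled_eval :: "'a ring \<Rightarrow> 'a \<Rightarrow> nat \<Rightarrow> (nat \<Rightarrow> 'a) \<Rightarrow> 'a" where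
  "scaled_eval R a M x = (\<Oplus>\<^bsub>R\<^esub>i\<in>{..M}. x i \<otimes>\<^bsub>R\<^esub> a [^]\<^bsub>R\<^esub> (M - i))"

definition unit_seq :: "'a ring \<Rightarrow> nat \<Rightarrow> nat \<Rightarrow> 'a" where
  "unit_seq R n = (\<lambda>i. if i = n then \<one>\<^bsub>R\<^esub> else \<zero>\<^bsub>R\<^esub>)"

lemma vanishes_above_mono: "vanishes_above R M x \<Longrightarrow> M \<le> N \<Longrightarrow> vanishes_above R N x"
  by (simp add: vanishes_above_def)

lemma vanishes_above_unit_seq: "vanishes_above R n (unit_seq R n)"
  by (simp add: vanishes_above_def unit_seq_def)

lemma (in ring) ideal_finsum_closed:
  assumes I: "ideal I R" and S: "finite S" and f: "\<And>i. i \<in> S \<Longrightarrow> f i \<in> I"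
  shows "(\<Oplus>i\<in>S. f i) \<in> I"
  using S f
proof (induction S rule: finite_induct)
  case empty
  then show ?case by (simp add: additive_subgroup.zero_closed[OF ideal.axioms(1)[OF I]])
next
  case (insert j S)
  then have "f \<in> insert j S \<rightarrow> carrier R"
    using ideal.Icarr[OF I] by auto
  with insert show ?case
    by (simp add: finsum_insert additive_subgroup.a_closed[OF ideal.axioms(1)[OF I]])
qed

context cring_modules
begin

lemma fin_seqs_carrier:
  "x \<in> carrier (fin_seqs R) \<longleftrightarrow> (\<forall>i. x i \<in> carrier R) \<and> finite {i. x i \<noteq> \<zero>}"
  by (simp add: fin_seqs_def)

lemma fin_seqs_add: "x \<oplus>\<^bsub>fin_seqs R\<^esub> y = (\<lambda>i. x i \<oplus> y i)"
  by (simp add: fin_seqs_def)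

lemma fin_seqs_smult: "r \<odot>\<^bsub>fin_seqs R\<^esub> x = (\<lambda>i. r \<otimes> x i)"
  by (simp add: fin_seqs_def)

lemma fin_seqs_zero: "\<zero>\<^bsub>fin_seqs R\<^esub> = (\<lambda>i. \<zero>)"
  by (simp add: fin_seqs_def)

lemma fin_seqs_closed: "x \<in> carrier (fin_seqs R) \<Longrightarrow> x i \<in> carrier R"
  by (simp add: fin_seqs_carrier)

lemma fin_seqs_if_vanishes_above:
  "(\<And>i. x i \<in> carrier R) \<Longrightarrow> vanishes_above R M x \<Longrightarrow> x \<in> carrier (fin_seqs R)"
  unfolding fin_seqs_carrier vanishes_above_def
  by (metis (mono_tags, lifting) finite_nat_set_iff_bounded_le mem_Collect_eq not_le)

lemma fin_seqs_vanishes_above: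
  assumes "x \<in> carrier (fin_seqs R)"
  obtains M where "vanishes_above R M x"
proof -
  obtain M where "\<forall>i\<in>{i. x i \<noteq> \<zero>}. i \<le> M"
    using assms finite_nat_set_iff_bounded_le by (auto simp: fin_seqs_carrier)
  then have "vanishes_above R M x"
    unfolding vanishes_above_def by (metis (mono_tags, lifting) mem_Collect_eq not_less)
  then show thesis ..
qed

lemma unit_seq_closed: "unit_seq R n i \<in> carrier R"
  by (simp add: unit_seq_def)

lemma unit_seq_fin_seqs: "unit_seq R n \<in> carrier (fin_seqs R)"
  by (rule fin_seqs_if_vanishes_above[OF unit_seq_closed vanishes_above_unit_seq])

lemma fin_seqs_module: "module R (fin_seqs R)"
proof (rule moduleI)
  show "abelian_group (fin_seqs R)"
  proof (rule abelian_groupI)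
    fix x y
    assume x: "x \<in> carrier (fin_seqs R)" and y: "y \<in> carrier (fin_seqs R)"
    have "{i. x i \<oplus> y i \<noteq> \<zero>} \<subseteq> {i. x i \<noteq> \<zero>} \<union> {i. y i \<noteq> \<zero>}"
      by auto
    then show "x \<oplus>\<^bsub>fin_seqs R\<^esub> y \<in> carrier (fin_seqs R)"
      using x y by (auto simp: fin_seqs_carrier fin_seqs_add intro: finite_subset)
  next
    fix x
    assume x: "x \<in> carrier (fin_seqs R)"
    have "{i. \<ominus> x i \<noteq> \<zero>} \<subseteq> {i. x i \<noteq> \<zero>}"
      using x by (auto simp: fin_seqs_carrier)
    then have "(\<lambda>i. \<ominus> x i) \<in> carrier (fin_seqs R)"
      using x by (auto simp: fin_seqs_carrier intro: finite_subset)
    moreover have "(\<lambda>i. \<ominus> x i) \<oplus>\<^bsub>fin_seqs R\<^esub> x = \<zero>\<^bsub>fin_seqs R\<^esub>"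
      using x by (simp add: fin_seqs_carrier fin_seqs_add fin_seqs_zero l_neg)
    ultimately show "\<exists>y\<in>carrier (fin_seqs R). y \<oplus>\<^bsub>fin_seqs R\<^esub> x = \<zero>\<^bsub>fin_seqs R\<^esub>"
      by blast
  qed (auto simp: fin_seqs_carrier fin_seqs_add fin_seqs_zero a_ac)
next
  fix a x
  assume a: "a \<in> carrier R" and x: "x \<in> carrier (fin_seqs R)"
  have "{i. a \<otimes> x i \<noteq> \<zero>} \<subseteq> {i. x i \<noteq> \<zero>}"
    using x a by (auto simp: fin_seqs_carrier)
  then show "a \<odot>\<^bsub>fin_seqs R\<^esub> x \<in> carrier (fin_seqs R)"
    using x a by (auto simp: fin_seqs_carrier fin_seqs_smult intro: finite_subset)
qed (auto simp: fin_seqs_carrier fin_seqs_smult fin_seqs_add l_distr r_distr m_assoc is_cring)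

lemma fin_seqs_minus:
  assumes x: "x \<in> carrier (fin_seqs R)" and y: "y \<in> carrier (fin_seqs R)"
  shows "x \<ominus>\<^bsub>fin_seqs R\<^esub> y = (\<lambda>i. x i \<ominus> y i)"
proof -
  interpret V: module R "fin_seqs R" by (rule fin_seqs_module)
  have "{i. \<ominus> y i \<noteq> \<zero>} \<subseteq> {i. y i \<noteq> \<zero>}"
    using y by (auto simp: fin_seqs_carrier)
  then have neg_y: "(\<lambda>i. \<ominus> y i) \<in> carrier (fin_seqs R)"
    using y by (auto simp: fin_seqs_carrier intro: finite_subset)
  have "(\<lambda>i. \<ominus> y i) \<oplus>\<^bsub>fin_seqs R\<^esub> y = \<zero>\<^bsub>fin_seqs R\<^esub>"
    using y by (simp add: fin_seqs_carrier fin_seqs_add fin_seqs_zero l_neg)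
  then have "\<ominus>\<^bsub>fin_seqs R\<^esub> y = (\<lambda>i. \<ominus> y i)"
    using V.add.inv_equality[OF _ y neg_y] by (simp add: a_inv_def)
  then show ?thesis
    by (simp add: a_minus_def fin_seqs_add)
qed

lemma scaled_eval_closed: "(\<And>i. x i \<in> carrier R) \<Longrightarrow> a \<in> carrier R \<Longrightarrow> scaled_eval R a M x \<in> carrier R"
  by (simp add: scaled_eval_def finsum_closed Pi_def)

lemma scaled_eval_add: "(\<And>i. x i \<in> carrier R) \<Longrightarrow> (\<And>i. y i \<in> carrier R) \<Longrightarrow> a \<in> carrier R \<Longrightarrow>
   scaled_eval R a M (\<lambda>i. x i \<oplus> y i) = scaled_eval R a M x \<oplus> scaled_eval R a M y"
  by (simp add: scaled_eval_def l_distr finsum_addf Pi_def)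

lemma scaled_eval_smult: "(\<And>i. x i \<in> carrier R) \<Longrightarrow> r \<in> carrier R \<Longrightarrow> a \<in> carrier R \<Longrightarrow>
   scaled_eval R a M (\<lambda>i. r \<otimes> x i) = r \<otimes> scaled_eval R a M x"
  by (simp add: scaled_eval_def finsum_rdistr m_assoc Pi_def)

lemma scaled_eval_minus: "(\<And>i. x i \<in> carrier R) \<Longrightarrow> (\<And>i. y i \<in> carrier R) \<Longrightarrow> a \<in> carrier R \<Longrightarrow>
   scaled_eval R a M (\<lambda>i. x i \<ominus> y i) = scaled_eval R a M x \<ominus> scaled_eval R a M y"
  using scaled_eval_add[of x "\<lambda>i. \<ominus> \<one> \<otimes> y i"] scaled_eval_smult[of y "\<ominus> \<one>"]
  by (simp add: a_minus_def l_minus scaled_eval_closed)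

lemma scaled_eval_cong: "(\<And>i. i \<le> M \<Longrightarrow> x i = y i) \<Longrightarrow> (\<And>i. y i \<in> carrier R) \<Longrightarrow>
    a \<in> carrier R \<Longrightarrow> scaled_eval R a M x = scaled_eval R a M y"
  unfolding scaled_eval_def by (rule finsum_cong') auto

lemma scaled_eval_unit_seq: "a \<in> carrier R \<Longrightarrow> scaled_eval R a N (unit_seq R N) = \<one>"
proof -
  assume a: "a \<in> carrier R"
  have "scaled_eval R a N (unit_seq R N) = (\<Oplus>i\<in>{..N}. if i = N then \<one> else \<zero>)"
    unfolding scaled_eval_def by (rule finsum_cong') (use a in \<open>auto simp: unit_seq_def\<close>)
  also have "\<dots> = \<one>"
    by (simp add: add.finprod_singleton_swap)
  finally show ?thesis .
qed

lemma scaled_eval_shift: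
  assumes x: "\<And>i. x i \<in> carrier R" and a: "a \<in> carrier R" and M: "vanishes_above R M x"
  shows "scaled_eval R a (M + k) x = a [^] k \<otimes> scaled_eval R a M x"
proof (induction k)
  case 0
  then show ?case using x a by (simp add: scaled_eval_closed)
next
  case (Suc k)
  have "x (Suc (M + k)) = \<zero>"
    using M by (simp add: vanishes_above_def)
  then have "scaled_eval R a (M + Suc k) x = (\<Oplus>i\<in>{..M + k}. x i \<otimes> a [^] (Suc (M + k) - i))"
    using x a by (simp add: scaled_eval_def Pi_def)
  also have "\<dots> = (\<Oplus>i\<in>{..M + k}. (x i \<otimes> a [^] (M + k - i)) \<otimes> a)"
    by (rule finsum_cong') (use x a in \<open>auto simp: Suc_diff_le m_assoc Pi_def\<close>)
  also have "\<dots> = scaled_eval R a (M + k) x \<otimes> a"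
    unfolding scaled_eval_def by (rule finsum_ldistr[symmetric]) (use x a in \<open>auto simp: Pi_def\<close>)
  also have "\<dots> = a [^] Suc k \<otimes> scaled_eval R a M x"
    using Suc x a by (simp add: scaled_eval_closed m_ac)
  finally show ?case .
qed

end

section \<open>A semi-compact module that is not pure-injective\<close>

text \<open>A single congruence modulo \<open>M[I] = 0\<close> pins down the solution; all congruences modulo
  \<open>M[I] = M\<close> hold trivially.\<close>

lemma semi_compact_if_annihilators_trivial:
  assumes M: "module R M"
    and ann: "\<And>I. ideal I R \<Longrightarrow> ann_sub R M I = carrier M \<or> ann_sub R M I = {\<zero>\<^bsub>M\<^esub>}"
  shows "semi_compact R M"
  unfolding semi_compact_def
proof (intro allI impI)
  interpret M: module R M by (rule M)
  fix S
  assume S: "S \<subseteq> {(y, I). y \<in> carrier M \<and> ideal I R}"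
    and solvable: "\<forall>F. F \<subseteq> S \<and> finite F \<longrightarrow>
      (\<exists>x\<in>carrier M. \<forall>(y, I)\<in>F. x \<ominus>\<^bsub>M\<^esub> y \<in> ann_sub R M I)"
  show "\<exists>x\<in>carrier M. \<forall>(y, I)\<in>S. x \<ominus>\<^bsub>M\<^esub> y \<in> ann_sub R M I"
  proof (cases "\<exists>y0 I0. (y0, I0) \<in> S \<and> ann_sub R M I0 = {\<zero>\<^bsub>M\<^esub>}")
    case True
    then obtain y0 I0 where y0: "(y0, I0) \<in> S" "ann_sub R M I0 = {\<zero>\<^bsub>M\<^esub>}"
      by blast
    have "y0 \<ominus>\<^bsub>M\<^esub> y \<in> ann_sub R M I" if "(y, I) \<in> S" for y I
    proof -
      have "{(y0, I0), (y, I)} \<subseteq> S \<and> finite {(y0, I0), (y, I)}"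
        using y0(1) that by simp
      from solvable[rule_format, OF this] obtain x where "x \<in> carrier M"
        "x \<ominus>\<^bsub>M\<^esub> y0 \<in> ann_sub R M I0" "x \<ominus>\<^bsub>M\<^esub> y \<in> ann_sub R M I"
        by auto
      moreover have "y0 \<in> carrier M"
        using S y0(1) by auto
      ultimately show ?thesis
        using y0(2) M.a_minus_eq_zero_imp_eq by force
    qed
    then show ?thesis
      using S y0(1) by blast
  next
    case False
    then have "ann_sub R M I = carrier M" if "(y, I) \<in> S" for y I
      using ann S that by blast
    then show ?thesis
      using S by (intro bexI[of _ "\<zero>\<^bsub>M\<^esub>"]) auto
  qed
qed

locale nonunit_mod_prime = cring_modules +
  fixes P a
  assumes prime: "primeideal P R" and a: "a \<in> carrier R" "a \<notin> P"
    and a_nonunit: "\<And>d. d \<in> carrier R \<Longrightarrow> a \<otimes> d \<ominus> \<one> \<notin> P"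
begin

lemma P_ideal: "ideal P R"
  using prime by (simp add: primeideal_def)

lemma P_subset: "x \<in> P \<Longrightarrow> x \<in> carrier R"
  using ideal.Icarr[OF P_ideal] by blast

lemma P_zero: "\<zero> \<in> P"
  using additive_subgroup.zero_closed[OF ideal.axioms(1)[OF P_ideal]] by simp

lemma P_add: "x \<in> P \<Longrightarrow> y \<in> P \<Longrightarrow> x \<oplus> y \<in> P"
  using additive_subgroup.a_closed[OF ideal.axioms(1)[OF P_ideal]] by simp

lemma P_neg: "x \<in> P \<Longrightarrow> \<ominus> x \<in> P"
  using additive_subgroup.a_inv_closed[OF ideal.axioms(1)[OF P_ideal]] by simp

lemma P_lmult: "x \<in> P \<Longrightarrow> r \<in> carrier R \<Longrightarrow> r \<otimes> x \<in> P"
  using ideal.I_l_closed[OF P_ideal] by simp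

lemma P_rmult: "x \<in> P \<Longrightarrow> r \<in> carrier R \<Longrightarrow> x \<otimes> r \<in> P"
  using ideal.I_r_closed[OF P_ideal] by simp

lemma P_prime: "x \<in> carrier R \<Longrightarrow> y \<in> carrier R \<Longrightarrow> x \<otimes> y \<in> P \<Longrightarrow> x \<in> P \<or> y \<in> P"
  using primeideal.I_prime[OF prime] by simp

lemma pow_notin_P: "a [^] (k::nat) \<notin> P"
proof (induction k)
  case 0
  then show ?case
    using ideal.one_imp_carrier[OF P_ideal] primeideal.I_notcarr[OF prime] by auto
next
  case (Suc k)
  then show ?case
    using P_prime[of "a [^] k" a] a by auto
qed

lemma pow_mult_in_P_imp: "y \<in> carrier R \<Longrightarrow> a [^] (k::nat) \<otimes> y \<in> P \<Longrightarrow> y \<in> P"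
  using P_prime[of "a [^] k" y] pow_notin_P a by blast

lemma scaled_eval_in_P: "(\<And>i. x i \<in> P) \<Longrightarrow> scaled_eval R a N x \<in> P"
  unfolding scaled_eval_def by (rule ideal_finsum_closed[OF P_ideal]) (auto intro: P_rmult a)

definition P_seqs :: "(nat \<Rightarrow> 'a) set" where
  "P_seqs = {x \<in> carrier (fin_seqs R). \<forall>i. x i \<in> P}"

definition kernel_seqs :: "(nat \<Rightarrow> 'a) set" where
  "kernel_seqs = {x \<in> carrier (fin_seqs R). \<exists>M. vanishes_above R M x \<and> scaled_eval R a M x \<in> P}"

lemma kernel_seqs_fin_seqs: "kernel_seqs \<subseteq> carrier (fin_seqs R)"
  by (auto simp: kernel_seqs_def)

text \<open>Membership in \<open>kernel_seqs\<close> does not depend on the chosen bound \<open>M\<close>, because \<open>a\<close> is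
  not a zero divisor modulo \<open>P\<close>.\<close>

lemma kernel_seqs_scaled_eval:
  assumes x: "x \<in> kernel_seqs" and N: "vanishes_above R N x"
  shows "scaled_eval R a N x \<in> P"
proof -
  obtain M where M: "vanishes_above R M x" "scaled_eval R a M x \<in> P"
    and x_fs: "x \<in> carrier (fin_seqs R)"
    using x by (auto simp: kernel_seqs_def)
  have xi: "\<And>i. x i \<in> carrier R"
    using x_fs by (simp add: fin_seqs_closed)
  show ?thesis
  proof (cases "M \<le> N")
    case True
    then have "scaled_eval R a N x = a [^] (N - M) \<otimes> scaled_eval R a M x"
      using scaled_eval_shift[OF xi a(1) M(1), of "N - M"] by simp
    then show ?thesis
      using M(2) P_lmult a by simp
  next
    case False
    then have "scaled_eval R a M x = a [^] (M - N) \<otimes> scaled_eval R a N x"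
      using scaled_eval_shift[OF xi a(1) N, of "M - N"] by simp
    then show ?thesis
      using pow_mult_in_P_imp[OF scaled_eval_closed[OF xi a(1)]] M(2) by simp
  qed
qed

lemma kernel_seqsI:
  "x \<in> carrier (fin_seqs R) \<Longrightarrow> vanishes_above R M x \<Longrightarrow> scaled_eval R a M x \<in> P \<Longrightarrow>
    x \<in> kernel_seqs"
  by (auto simp: kernel_seqs_def)

lemma P_seqs_subset_kernel_seqs: "P_seqs \<subseteq> kernel_seqs"
proof
  fix x
  assume x: "x \<in> P_seqs"
  then obtain M where "vanishes_above R M x"
    using fin_seqs_vanishes_above by (auto simp: P_seqs_def)
  with x show "x \<in> kernel_seqs"
    by (intro kernel_seqsI scaled_eval_in_P) (auto simp: P_seqs_def)
qed

lemma P_seqs_submodule: "submodule P_seqs R (fin_seqs R)"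
proof -
  interpret V: module R "fin_seqs R" by (rule fin_seqs_module)
  show ?thesis
  proof (rule V.submoduleI)
    fix x
    assume x: "x \<in> P_seqs"
    then have "\<ominus>\<^bsub>fin_seqs R\<^esub> x = (\<ominus> \<one>) \<odot>\<^bsub>fin_seqs R\<^esub> x"
      using V.smult_l_minus[of \<one> x] by (simp add: P_seqs_def)
    then show "\<ominus>\<^bsub>fin_seqs R\<^esub> x \<in> P_seqs"
      using x V.smult_closed[of "\<ominus> \<one>" x] by (auto simp: P_seqs_def fin_seqs_smult P_lmult)
  qed (auto simp: P_seqs_def fin_seqs_zero fin_seqs_add fin_seqs_smult P_zero P_add P_lmult
      V.a_closed[unfolded fin_seqs_add] V.smult_closed[unfolded fin_seqs_smult]
      V.zero_closed[unfolded fin_seqs_zero])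
qed

lemma kernel_seqs_add:
  assumes x: "x \<in> kernel_seqs" and y: "y \<in> kernel_seqs"
  shows "x \<oplus>\<^bsub>fin_seqs R\<^esub> y \<in> kernel_seqs"
proof -
  interpret V: module R "fin_seqs R" by (rule fin_seqs_module)
  have x_fs: "x \<in> carrier (fin_seqs R)" and y_fs: "y \<in> carrier (fin_seqs R)"
    using x y by (auto simp: kernel_seqs_def)
  obtain M1 M2 where "vanishes_above R M1 x" "vanishes_above R M2 y"
    using fin_seqs_vanishes_above x_fs y_fs by metis
  then have M: "vanishes_above R (max M1 M2) x" "vanishes_above R (max M1 M2) y"
    by (auto intro: vanishes_above_mono)
  have "scaled_eval R a (max M1 M2) (x \<oplus>\<^bsub>fin_seqs R\<^esub> y) =
      scaled_eval R a (max M1 M2) x \<oplus> scaled_eval R a (max M1 M2) y"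
    using x_fs y_fs a by (simp add: fin_seqs_add scaled_eval_add fin_seqs_closed)
  also have "\<dots> \<in> P"
    using kernel_seqs_scaled_eval[OF x M(1)] kernel_seqs_scaled_eval[OF y M(2)] by (rule P_add)
  finally show ?thesis
    using M V.a_closed[OF x_fs y_fs]
    by (intro kernel_seqsI[of _ "max M1 M2"]) (auto simp: vanishes_above_def fin_seqs_add)
qed

lemma kernel_seqs_smult:
  assumes r: "r \<in> carrier R" and x: "x \<in> kernel_seqs"
  shows "r \<odot>\<^bsub>fin_seqs R\<^esub> x \<in> kernel_seqs"
proof -
  interpret V: module R "fin_seqs R" by (rule fin_seqs_module)
  have x_fs: "x \<in> carrier (fin_seqs R)"
    using x by (auto simp: kernel_seqs_def)
  obtain M where M: "vanishes_above R M x"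
    using fin_seqs_vanishes_above x_fs by metis
  have "scaled_eval R a M (r \<odot>\<^bsub>fin_seqs R\<^esub> x) = r \<otimes> scaled_eval R a M x"
    using x_fs a r by (simp add: fin_seqs_smult scaled_eval_smult fin_seqs_closed)
  also have "\<dots> \<in> P"
    using kernel_seqs_scaled_eval[OF x M] r by (rule P_lmult)
  finally show ?thesis
    using M r V.smult_closed[OF r x_fs]
    by (intro kernel_seqsI[of _ M]) (auto simp: vanishes_above_def fin_seqs_smult)
qed

lemma kernel_seqs_submodule: "submodule kernel_seqs R (fin_seqs R)"
proof -
  interpret V: module R "fin_seqs R" by (rule fin_seqs_module)
  show ?thesis
  proof (rule V.submoduleI)
    show "\<zero>\<^bsub>fin_seqs R\<^esub> \<in> kernel_seqs"
      using P_seqs_subset_kernel_seqs V.zero_closed P_zero by (auto simp: P_seqs_def fin_seqs_zero)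
    show "\<ominus>\<^bsub>fin_seqs R\<^esub> x \<in> kernel_seqs" if "x \<in> kernel_seqs" for x
      using kernel_seqs_smult[OF _ that, of "\<ominus> \<one>"] V.smult_l_minus[of \<one> x] that kernel_seqs_fin_seqs by auto
  qed (use kernel_seqs_fin_seqs kernel_seqs_add kernel_seqs_smult in auto)
qed


sublocale F: quotient_module R "fin_seqs R" P_seqs
  by (intro quotient_module.intro quotient_module_axioms.intro fin_seqs_module P_seqs_submodule)

sublocale C: quotient_module R "fin_seqs R" kernel_seqs
  by (intro quotient_module.intro quotient_module_axioms.intro fin_seqs_module kernel_seqs_submodule)

text \<open>Over \<open>D = R/P\<close>: \<open>free_mod\<close> is \<open>D\<^sup>(\<^sup>\<nat>\<^sup>)\<close>, \<open>ker_mod\<close> is the kernel of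
  \<open>D\<^sup>(\<^sup>\<nat>\<^sup>) \<rightarrow> D[1/a]\<close>, \<open>e\<^sub>i \<mapsto> a\<^sup>-\<^sup>i\<close>, and \<open>coker_mod\<close> is its image.\<close>

abbreviation cls :: "(nat \<Rightarrow> 'a) \<Rightarrow> (nat \<Rightarrow> 'a) set set" where
  "cls \<equiv> quot_class (fin_seqs R) P_seqs"

abbreviation free_mod :: "('a, (nat \<Rightarrow> 'a) set set) module" where
  "free_mod \<equiv> quot_module (fin_seqs R) P_seqs"

abbreviation coker_mod :: "('a, (nat \<Rightarrow> 'a) set set) module" where
  "coker_mod \<equiv> quot_module (fin_seqs R) kernel_seqs"

abbreviation ker_mod :: "('a, (nat \<Rightarrow> 'a) set set) module" where
  "ker_mod \<equiv> free_mod\<lparr>carrier := cls ` kernel_seqs\<rparr>"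

definition coker_proj :: "(nat \<Rightarrow> 'a) set set \<Rightarrow> (nat \<Rightarrow> 'a) set set" where
  "coker_proj X = quot_class (fin_seqs R) kernel_seqs (quot_rep (fin_seqs R) P_seqs X)"

lemma ker_mod_submodule: "submodule (cls ` kernel_seqs) R free_mod"
proof -
  interpret Q: module R free_mod by (rule F.quot_module)
  show ?thesis
  proof (rule Q.submoduleI)
    show "cls ` kernel_seqs \<subseteq> carrier free_mod"
      using kernel_seqs_fin_seqs by (auto simp: F.quot_carrier)
    show "\<zero>\<^bsub>free_mod\<^esub> \<in> cls ` kernel_seqs"
      using C.W_zero by (simp add: F.quot_zero)
  next
    fix X Y
    assume "X \<in> cls ` kernel_seqs" "Y \<in> cls ` kernel_seqs"
    then show "X \<oplus>\<^bsub>free_mod\<^esub> Y \<in> cls ` kernel_seqs"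
      using kernel_seqs_fin_seqs C.W_add by (auto simp: F.quot_add subsetD)
  next
    fix r X
    assume "r \<in> carrier R" "X \<in> cls ` kernel_seqs"
    then show "r \<odot>\<^bsub>free_mod\<^esub> X \<in> cls ` kernel_seqs"
      using kernel_seqs_fin_seqs C.W_smult by (auto simp: F.quot_smult subsetD)
  next
    fix X
    assume "X \<in> cls ` kernel_seqs"
    then obtain x where x: "x \<in> kernel_seqs" "X = cls x"
      by auto
    then have x_fs: "x \<in> carrier (fin_seqs R)"
      using kernel_seqs_fin_seqs by auto
    have "\<ominus>\<^bsub>free_mod\<^esub> X = (\<ominus> \<one>) \<odot>\<^bsub>free_mod\<^esub> X"
      using Q.smult_l_minus[of \<one> X] x x_fs by (simp add: F.quot_carrier)
    also have "\<dots> = cls ((\<ominus> \<one>) \<odot>\<^bsub>fin_seqs R\<^esub> x)"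
      using x x_fs by (simp add: F.quot_smult)
    finally show "\<ominus>\<^bsub>free_mod\<^esub> X \<in> cls ` kernel_seqs"
      using C.W_smult[of "\<ominus> \<one>"] x by auto
  qed
qed

lemma ker_mod_module: "module R ker_mod"
  by (rule submodule.submodule_is_module[OF ker_mod_submodule F.quot_module])

lemma coker_proj_class: "x \<in> carrier (fin_seqs R) \<Longrightarrow> coker_proj (cls x) = quot_class (fin_seqs R) kernel_seqs x"
  unfolding coker_proj_def
  using F.quot_rep[of x] P_seqs_subset_kernel_seqs by (auto simp: C.quot_class_eq_iff)

lemma coker_proj_lin: "mod_lin R free_mod coker_mod coker_proj"
  unfolding mod_lin_def
  by (auto simp: F.quot_carrier C.quot_carrier coker_proj_class F.quot_add C.quot_add
      F.quot_smult C.quot_smult)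

lemma coker_proj_onto: "coker_proj ` carrier free_mod = carrier coker_mod"
  by (auto simp: F.quot_carrier C.quot_carrier coker_proj_class image_iff)

lemma coker_proj_kernel: "{X \<in> carrier free_mod. coker_proj X = \<zero>\<^bsub>coker_mod\<^esub>} = id ` carrier ker_mod"
proof (intro equalityI subsetI)
  fix X
  assume "X \<in> {X \<in> carrier free_mod. coker_proj X = \<zero>\<^bsub>coker_mod\<^esub>}"
  then obtain x where "x \<in> carrier (fin_seqs R)" "X = cls x"
      "quot_class (fin_seqs R) kernel_seqs x = \<zero>\<^bsub>coker_mod\<^esub>"
    by (auto simp: F.quot_carrier coker_proj_class)
  then show "X \<in> id ` carrier ker_mod"
    using C.quot_class_eq_zero_iff by auto
next
  fix X
  assume "X \<in> id ` carrier ker_mod"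
  then obtain x where x: "x \<in> kernel_seqs" "X = cls x"
    by auto
  then have x_fs: "x \<in> carrier (fin_seqs R)"
    using kernel_seqs_fin_seqs by auto
  have "coker_proj X = \<zero>\<^bsub>coker_mod\<^esub>"
    using x x_fs by (simp add: coker_proj_class C.quot_class_eq_zero_iff)
  moreover have "X \<in> carrier free_mod"
    using x x_fs by (simp add: F.quot_carrier)
  ultimately show "X \<in> {X \<in> carrier free_mod. coker_proj X = \<zero>\<^bsub>coker_mod\<^esub>}"
    by simp
qed


text \<open>Truncate \<open>x\<close> above \<open>N\<close> and correct the \<open>N\<close>-th entry so that the scaled evaluation
  vanishes. This maps into the kernel and fixes every kernel element supported in \<open>[0, N]\<close>.\<close>

definition kernel_retract :: "nat \<Rightarrow> (nat \<Rightarrow> 'a) \<Rightarrow> nat \<Rightarrow> 'a" where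
  "kernel_retract N x =
     (\<lambda>i. (if i \<le> N then x i else \<zero>) \<oplus> (\<ominus> scaled_eval R a N x) \<otimes> unit_seq R N i)"

lemma kernel_retract_closed:
  assumes x: "x \<in> carrier (fin_seqs R)"
  shows "kernel_retract N x i \<in> carrier R"
  using x a by (simp add: kernel_retract_def unit_seq_closed scaled_eval_closed fin_seqs_closed)

lemma vanishes_above_kernel_retract:
  "x \<in> carrier (fin_seqs R) \<Longrightarrow> vanishes_above R N (kernel_retract N x)"
  using a by (simp add: vanishes_above_def kernel_retract_def unit_seq_def scaled_eval_closed
      fin_seqs_closed)

lemma kernel_retract_fin_seqs:
  "x \<in> carrier (fin_seqs R) \<Longrightarrow> kernel_retract N x \<in> carrier (fin_seqs R)"
  by (rule fin_seqs_if_vanishes_above[OF kernel_retract_closed vanishes_above_kernel_retract])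

lemma scaled_eval_kernel_retract:
  assumes x: "x \<in> carrier (fin_seqs R)"
  shows "scaled_eval R a N (kernel_retract N x) = \<zero>"
proof -
  have xi: "\<And>i. x i \<in> carrier R" and e: "scaled_eval R a N x \<in> carrier R"
    using x a by (simp_all add: fin_seqs_closed scaled_eval_closed)
  have "scaled_eval R a N (kernel_retract N x) =
      scaled_eval R a N (\<lambda>i. if i \<le> N then x i else \<zero>) \<oplus>
      (\<ominus> scaled_eval R a N x) \<otimes> scaled_eval R a N (unit_seq R N)"
    unfolding kernel_retract_def
    using xi e a by (simp add: scaled_eval_add scaled_eval_smult unit_seq_closed)
  also have "scaled_eval R a N (\<lambda>i. if i \<le> N then x i else \<zero>) = scaled_eval R a N x"
    using xi a by (intro scaled_eval_cong) auto
  finally show ?thesis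
    using e a by (simp add: scaled_eval_unit_seq r_neg)
qed

lemma kernel_retract_kernel_seqs:
  "x \<in> carrier (fin_seqs R) \<Longrightarrow> kernel_retract N x \<in> kernel_seqs"
  using scaled_eval_kernel_retract P_zero
  by (intro kernel_seqsI[OF kernel_retract_fin_seqs vanishes_above_kernel_retract]) auto

lemma kernel_retract_lin: "mod_lin R (fin_seqs R) (fin_seqs R) (kernel_retract N)"
  unfolding mod_lin_def
proof (intro conjI ballI)
  show "kernel_retract N \<in> carrier (fin_seqs R) \<rightarrow> carrier (fin_seqs R)"
    using kernel_retract_fin_seqs by auto
next
  fix x y
  assume x: "x \<in> carrier (fin_seqs R)" and y: "y \<in> carrier (fin_seqs R)"
  have xi: "\<And>i. x i \<in> carrier R" and yi: "\<And>i. y i \<in> carrier R"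
    using x y by (auto simp: fin_seqs_closed)
  have e: "scaled_eval R a N x \<in> carrier R" "scaled_eval R a N y \<in> carrier R"
    using xi yi a by (auto simp: scaled_eval_closed)
  have "scaled_eval R a N (\<lambda>i. x i \<oplus> y i) = scaled_eval R a N x \<oplus> scaled_eval R a N y"
    using xi yi a by (simp add: scaled_eval_add)
  then show "kernel_retract N (x \<oplus>\<^bsub>fin_seqs R\<^esub> y) =
      kernel_retract N x \<oplus>\<^bsub>fin_seqs R\<^esub> kernel_retract N y"
    unfolding fin_seqs_add kernel_retract_def
    using xi yi e by (intro ext) (auto simp: unit_seq_def a_ac minus_add)
next
  fix r x
  assume r: "r \<in> carrier R" and x: "x \<in> carrier (fin_seqs R)"
  have xi: "\<And>i. x i \<in> carrier R"
    using x by (auto simp: fin_seqs_closed)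
  have e: "scaled_eval R a N x \<in> carrier R"
    using xi a by (auto simp: scaled_eval_closed)
  have "scaled_eval R a N (\<lambda>i. r \<otimes> x i) = r \<otimes> scaled_eval R a N x"
    using xi r a by (simp add: scaled_eval_smult)
  then show "kernel_retract N (r \<odot>\<^bsub>fin_seqs R\<^esub> x) = r \<odot>\<^bsub>fin_seqs R\<^esub> kernel_retract N x"
    unfolding fin_seqs_smult kernel_retract_def
    using xi e r by (intro ext) (auto simp: unit_seq_def r_minus r_distr)
qed

lemma kernel_retract_P_seqs: "x \<in> P_seqs \<Longrightarrow> kernel_retract N x \<in> P_seqs"
proof -
  assume x: "x \<in> P_seqs"
  then have x_fs: "x \<in> carrier (fin_seqs R)" and xP: "\<And>i. x i \<in> P"
    by (auto simp: P_seqs_def)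
  have "kernel_retract N x i \<in> P" for i
    unfolding kernel_retract_def
    by (rule P_add) (auto simp: xP P_zero P_neg scaled_eval_in_P unit_seq_closed intro!: P_rmult)
  then show ?thesis
    using kernel_retract_fin_seqs[OF x_fs] by (auto simp: P_seqs_def)
qed

lemma kernel_retract_fixes:
  assumes x: "x \<in> kernel_seqs" and N: "vanishes_above R N x"
  shows "kernel_retract N x \<ominus>\<^bsub>fin_seqs R\<^esub> x \<in> P_seqs"
proof -
  have x_fs: "x \<in> carrier (fin_seqs R)"
    using x kernel_seqs_fin_seqs by auto
  have xi: "\<And>i. x i \<in> carrier R"
    using x_fs by (simp add: fin_seqs_closed)
  have e: "scaled_eval R a N x \<in> P"
    by (rule kernel_seqs_scaled_eval[OF x N])
  have "kernel_retract N x i \<ominus> x i = (\<ominus> scaled_eval R a N x) \<otimes> unit_seq R N i" for i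
    using N xi P_subset[OF e] unfolding kernel_retract_def
    by (auto simp: vanishes_above_def unit_seq_def a_minus_def a_ac r_neg r_neg2)
  then have "(kernel_retract N x \<ominus>\<^bsub>fin_seqs R\<^esub> x) i \<in> P" for i
    using e unit_seq_closed
    by (auto simp: fin_seqs_minus[OF kernel_retract_fin_seqs[OF x_fs] x_fs] intro: P_rmult P_neg)
  then show ?thesis
    using F.minus_closed[OF kernel_retract_fin_seqs[OF x_fs] x_fs] by (auto simp: P_seqs_def)
qed

definition ker_retraction :: "nat \<Rightarrow> (nat \<Rightarrow> 'a) set set \<Rightarrow> (nat \<Rightarrow> 'a) set set" where
  "ker_retraction N X = cls (kernel_retract N (quot_rep (fin_seqs R) P_seqs X))"

lemma ker_retraction_class:
  assumes x: "x \<in> carrier (fin_seqs R)"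
  shows "ker_retraction N (cls x) = cls (kernel_retract N x)"
proof -
  let ?y = "quot_rep (fin_seqs R) P_seqs (cls x)"
  have y: "?y \<in> carrier (fin_seqs R)" "?y \<ominus>\<^bsub>fin_seqs R\<^esub> x \<in> P_seqs"
    using F.quot_rep[OF x] by auto
  have "kernel_retract N ?y \<ominus>\<^bsub>fin_seqs R\<^esub> kernel_retract N x = kernel_retract N (?y \<ominus>\<^bsub>fin_seqs R\<^esub> x)"
    using mod_lin_minus[OF fin_seqs_module fin_seqs_module kernel_retract_lin y(1) x] by simp
  also have "\<dots> \<in> P_seqs"
    by (rule kernel_retract_P_seqs[OF y(2)])
  finally show ?thesis
    unfolding ker_retraction_def using F.quot_class_eq_iff kernel_retract_fin_seqs y(1) x by simp
qed

lemma ker_retraction_lin: "mod_lin R free_mod ker_mod (ker_retraction N)"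
  unfolding mod_lin_def
proof (intro conjI ballI)
  show "ker_retraction N \<in> carrier free_mod \<rightarrow> carrier ker_mod"
    by (auto simp: F.quot_carrier ker_retraction_class kernel_retract_kernel_seqs)
next
  fix X Y
  assume "X \<in> carrier free_mod" "Y \<in> carrier free_mod"
  then obtain x y where xy: "x \<in> carrier (fin_seqs R)" "y \<in> carrier (fin_seqs R)"
    "X = cls x" "Y = cls y"
    by (auto simp: F.quot_carrier)
  moreover have "kernel_retract N (x \<oplus>\<^bsub>fin_seqs R\<^esub> y) =
      kernel_retract N x \<oplus>\<^bsub>fin_seqs R\<^esub> kernel_retract N y"
    using kernel_retract_lin xy by (simp add: mod_lin_def)
  ultimately show "ker_retraction N (X \<oplus>\<^bsub>free_mod\<^esub> Y) =
      ker_retraction N X \<oplus>\<^bsub>ker_mod\<^esub> ker_retraction N Y"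
    by (simp add: F.quot_add ker_retraction_class kernel_retract_fin_seqs)
next
  fix r X
  assume r: "r \<in> carrier R" and "X \<in> carrier free_mod"
  then obtain x where x: "x \<in> carrier (fin_seqs R)" "X = cls x"
    by (auto simp: F.quot_carrier)
  moreover have "kernel_retract N (r \<odot>\<^bsub>fin_seqs R\<^esub> x) = r \<odot>\<^bsub>fin_seqs R\<^esub> kernel_retract N x"
    using kernel_retract_lin x r by (simp add: mod_lin_def)
  ultimately show "ker_retraction N (r \<odot>\<^bsub>free_mod\<^esub> X) = r \<odot>\<^bsub>ker_mod\<^esub> ker_retraction N X"
    using r by (simp add: F.quot_smult ker_retraction_class kernel_retract_fin_seqs)
qed

lemma ker_mod_locally_split:
  assumes S: "finite S" "S \<subseteq> carrier ker_mod"
  shows "\<exists>k. mod_lin R free_mod ker_mod k \<and> (\<forall>X\<in>S. k (id X) = X)"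
proof -
  have "\<forall>X\<in>S. \<exists>x. x \<in> kernel_seqs \<and> X = cls x"
    using S(2) by auto
  then obtain rep where rep: "\<And>X. X \<in> S \<Longrightarrow> rep X \<in> kernel_seqs \<and> X = cls (rep X)"
    by metis
  then have rep_fs: "\<And>X. X \<in> S \<Longrightarrow> rep X \<in> carrier (fin_seqs R)"
    using kernel_seqs_fin_seqs by auto
  have "\<exists>M. vanishes_above R M (rep X)" if "X \<in> S" for X
    using fin_seqs_vanishes_above[OF rep_fs[OF that]] by metis
  then obtain bound where bound: "\<And>X. X \<in> S \<Longrightarrow> vanishes_above R (bound X) (rep X)"
    by metis
  define N where "N = Max (insert 0 (bound ` S))"
  have "ker_retraction N X = X" if X: "X \<in> S" for X
  proof -
    have "vanishes_above R N (rep X)"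
      using bound[OF X] S(1) X by (auto simp: N_def intro: vanishes_above_mono)
    then have "kernel_retract N (rep X) \<ominus>\<^bsub>fin_seqs R\<^esub> rep X \<in> P_seqs"
      using kernel_retract_fixes rep[OF X] by blast
    then have "cls (kernel_retract N (rep X)) = cls (rep X)"
      using F.quot_class_eq_iff[OF kernel_retract_fin_seqs[OF rep_fs[OF X]] rep_fs[OF X]] by blast
    then show ?thesis
      using rep[OF X] ker_retraction_class[OF rep_fs[OF X]] by simp
  qed
  then show ?thesis
    using ker_retraction_lin by auto
qed

lemma ann_ker_mod_if_subset_P:
  assumes I: "I \<subseteq> P"
  shows "ann_sub R ker_mod I = carrier ker_mod"
proof -
  have "r \<odot>\<^bsub>ker_mod\<^esub> X = \<zero>\<^bsub>ker_mod\<^esub>" if r: "r \<in> I" and X: "X \<in> carrier ker_mod" for r X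
  proof -
    obtain x where x: "x \<in> kernel_seqs" "X = cls x"
      using X by auto
    have x_fs: "x \<in> carrier (fin_seqs R)"
      using x kernel_seqs_fin_seqs by auto
    have rP: "r \<in> P" and rc: "r \<in> carrier R"
      using r I P_subset by auto
    have "r \<odot>\<^bsub>fin_seqs R\<^esub> x \<in> P_seqs"
      using rP rc F.smult_closed[OF rc x_fs]
      by (auto simp: P_seqs_def fin_seqs_smult fin_seqs_closed[OF x_fs] P_lmult P_rmult)
    then show ?thesis
      using x x_fs rc F.smult_closed[OF rc x_fs]
      by (simp add: F.quot_smult F.quot_class_eq_zero_iff)
  qed
  then show ?thesis
    by (auto simp: ann_sub_def)
qed

lemma ann_ker_mod_if_not_subset_P:
  assumes I: "ideal I R" and nI: "\<not> I \<subseteq> P"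
  shows "ann_sub R ker_mod I = {\<zero>\<^bsub>ker_mod\<^esub>}"
proof
  interpret K: module R ker_mod by (rule ker_mod_module)
  obtain r where r: "r \<in> I" "r \<notin> P"
    using nI by auto
  have rc: "r \<in> carrier R"
    using r(1) ideal.Icarr[OF I] by auto
  show "ann_sub R ker_mod I \<subseteq> {\<zero>\<^bsub>ker_mod\<^esub>}"
  proof
    fix X
    assume X: "X \<in> ann_sub R ker_mod I"
    then obtain x where x: "x \<in> kernel_seqs" "X = cls x"
      by (auto simp: ann_sub_def)
    have x_fs: "x \<in> carrier (fin_seqs R)"
      using x kernel_seqs_fin_seqs by auto
    have "r \<odot>\<^bsub>ker_mod\<^esub> X = \<zero>\<^bsub>ker_mod\<^esub>"
      using X r by (auto simp: ann_sub_def)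
    then have "r \<odot>\<^bsub>fin_seqs R\<^esub> x \<in> P_seqs"
      using x x_fs rc F.smult_closed[OF rc x_fs]
      by (simp add: F.quot_smult F.quot_class_eq_zero_iff)
    then have "r \<otimes> x i \<in> P" for i
      by (simp add: P_seqs_def fin_seqs_smult)
    then have "x \<in> P_seqs"
      using P_prime[OF rc fin_seqs_closed[OF x_fs]] r(2) x_fs by (auto simp: P_seqs_def)
    then show "X \<in> {\<zero>\<^bsub>ker_mod\<^esub>}"
      using x x_fs by (simp add: F.quot_class_eq_zero_iff)
  qed
  have "\<forall>r\<in>I. r \<odot>\<^bsub>ker_mod\<^esub> \<zero>\<^bsub>ker_mod\<^esub> = \<zero>\<^bsub>ker_mod\<^esub>"
    using K.smult_r_null ideal.Icarr[OF I] by blast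
  then show "{\<zero>\<^bsub>ker_mod\<^esub>} \<subseteq> ann_sub R ker_mod I"
    unfolding ann_sub_def using K.zero_closed by blast
qed

lemma ker_mod_semi_compact: "semi_compact R ker_mod"
  using ann_ker_mod_if_subset_P ann_ker_mod_if_not_subset_P
  by (intro semi_compact_if_annihilators_trivial[OF ker_mod_module]) blast

lemma pure_exact_ker_mod: "pure_exact R ker_mod id free_mod coker_proj coker_mod"
  using kernel_seqs_fin_seqs
  by (intro pure_exact_if_locally_split[OF is_cring ker_mod_module F.quot_module C.quot_module
        _ coker_proj_lin _ coker_proj_onto coker_proj_kernel ker_mod_locally_split])
    (auto simp: mod_lin_def F.quot_carrier)


lemma unit_seq_step_kernel:
  "unit_seq R n \<oplus>\<^bsub>fin_seqs R\<^esub> (\<ominus> a) \<odot>\<^bsub>fin_seqs R\<^esub> unit_seq R (Suc n) \<in> kernel_seqs"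
proof -
  define d where "d = unit_seq R n \<oplus>\<^bsub>fin_seqs R\<^esub> (\<ominus> a) \<odot>\<^bsub>fin_seqs R\<^esub> unit_seq R (Suc n)"
  have ma: "\<ominus> a \<in> carrier R"
    using a by simp
  have d_fs: "d \<in> carrier (fin_seqs R)"
    unfolding d_def using F.smult_closed[OF ma unit_seq_fin_seqs] unit_seq_fin_seqs by simp
  have "scaled_eval R a (Suc n) (unit_seq R n) = a"
    using scaled_eval_shift[OF unit_seq_closed a(1) vanishes_above_unit_seq, of n 1]
      scaled_eval_unit_seq[OF a(1), of n] a
    by simp
  then have "scaled_eval R a (Suc n) d = a \<oplus> (\<ominus> a) \<otimes> \<one>"
    unfolding d_def fin_seqs_add fin_seqs_smult
    using ma a by (simp add: scaled_eval_add scaled_eval_smult unit_seq_closed scaled_eval_unit_seq)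
  then have "scaled_eval R a (Suc n) d \<in> P"
    using a P_zero by (simp add: r_neg)
  moreover have "vanishes_above R (Suc n) d"
    using ma by (simp add: d_def vanishes_above_def fin_seqs_add fin_seqs_smult unit_seq_def)
  ultimately show ?thesis
    using kernel_seqsI[OF d_fs] d_def by blast
qed

context
  fixes k and lift :: "nat \<Rightarrow> nat \<Rightarrow> 'a"
  assumes k_lin: "mod_lin R free_mod ker_mod k"
    and k_fixes: "\<And>X. X \<in> carrier ker_mod \<Longrightarrow> k X = X"
    and lift_kernel: "\<And>n. lift n \<in> kernel_seqs"
    and lift: "\<And>n. k (cls (unit_seq R n)) = cls (lift n)"
begin

definition defect :: "nat \<Rightarrow> nat \<Rightarrow> 'a" where
  "defect n i = unit_seq R n i \<ominus> lift n i"

lemma lift_fin_seqs: "lift n \<in> carrier (fin_seqs R)"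
  using lift_kernel kernel_seqs_fin_seqs by auto

lemma defect_closed: "defect n i \<in> carrier R"
  using lift_fin_seqs by (simp add: defect_def unit_seq_closed fin_seqs_closed)

lemma defect_fin_seqs: "defect n \<in> carrier (fin_seqs R)"
proof -
  have "defect n = unit_seq R n \<ominus>\<^bsub>fin_seqs R\<^esub> lift n"
    by (simp add: defect_def fin_seqs_minus unit_seq_fin_seqs lift_fin_seqs fun_eq_iff)
  then show ?thesis
    using unit_seq_fin_seqs lift_fin_seqs by simp
qed

text \<open>Applying \<open>k\<close> to \<open>e\<^sub>n - a e\<^sub>n\<^sub>+\<^sub>1\<close>, which lies in the kernel, gives
  \<open>w\<^sub>n \<equiv> a w\<^sub>n\<^sub>+\<^sub>1\<close> modulo \<open>P\<close> for the defects \<open>w\<^sub>n = e\<^sub>n - k(e\<^sub>n)\<close>.\<close>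

lemma defect_step: "defect n i \<ominus> a \<otimes> defect (Suc n) i \<in> P"
proof -
  have k_add: "\<And>X Y. X \<in> carrier free_mod \<Longrightarrow> Y \<in> carrier free_mod \<Longrightarrow>
      k (X \<oplus>\<^bsub>free_mod\<^esub> Y) = k X \<oplus>\<^bsub>ker_mod\<^esub> k Y"
    and k_smult: "\<And>r X. r \<in> carrier R \<Longrightarrow> X \<in> carrier free_mod \<Longrightarrow>
      k (r \<odot>\<^bsub>free_mod\<^esub> X) = r \<odot>\<^bsub>ker_mod\<^esub> k X"
    using k_lin by (auto simp: mod_lin_def)
  have e_free: "cls (unit_seq R m) \<in> carrier free_mod" for m
    using unit_seq_fin_seqs by (simp add: F.quot_carrier)
  have ma: "\<ominus> a \<in> carrier R"
    using a by simp
  define d where "d = unit_seq R n \<oplus>\<^bsub>fin_seqs R\<^esub> (\<ominus> a) \<odot>\<^bsub>fin_seqs R\<^esub> unit_seq R (Suc n)"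
  have d_fs: "d \<in> carrier (fin_seqs R)"
    unfolding d_def using unit_seq_fin_seqs ma by simp
  have d_kernel: "d \<in> kernel_seqs"
    unfolding d_def by (rule unit_seq_step_kernel)
  have cls_d: "cls d = cls (unit_seq R n) \<oplus>\<^bsub>free_mod\<^esub> (\<ominus> a) \<odot>\<^bsub>free_mod\<^esub> cls (unit_seq R (Suc n))"
    unfolding d_def using unit_seq_fin_seqs ma by (simp add: F.quot_add F.quot_smult)
  have "cls d = k (cls d)"
    using d_kernel by (simp add: k_fixes)
  also have "\<dots> = k (cls (unit_seq R n)) \<oplus>\<^bsub>free_mod\<^esub> (\<ominus> a) \<odot>\<^bsub>free_mod\<^esub> k (cls (unit_seq R (Suc n)))"
    unfolding cls_d using e_free ma module.smult_closed[OF F.quot_module] by (simp add: k_add k_smult)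
  also have "\<dots> = cls (lift n \<oplus>\<^bsub>fin_seqs R\<^esub> (\<ominus> a) \<odot>\<^bsub>fin_seqs R\<^esub> lift (Suc n))"
    using lift_fin_seqs ma by (simp add: lift F.quot_add F.quot_smult)
  finally have "d \<ominus>\<^bsub>fin_seqs R\<^esub> (lift n \<oplus>\<^bsub>fin_seqs R\<^esub> (\<ominus> a) \<odot>\<^bsub>fin_seqs R\<^esub> lift (Suc n)) \<in> P_seqs"
    using F.quot_class_eq_iff[OF d_fs] lift_fin_seqs ma by simp
  moreover have "lift n \<oplus>\<^bsub>fin_seqs R\<^esub> (\<ominus> a) \<odot>\<^bsub>fin_seqs R\<^esub> lift (Suc n) \<in> carrier (fin_seqs R)"
    using lift_fin_seqs ma by simp
  ultimately have "d i \<ominus> (lift n i \<oplus> (\<ominus> a) \<otimes> lift (Suc n) i) \<in> P"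
    using d_fs by (simp add: P_seqs_def fin_seqs_minus) (simp add: fin_seqs_add fin_seqs_smult)
  moreover have "d i \<ominus> (lift n i \<oplus> (\<ominus> a) \<otimes> lift (Suc n) i) = defect n i \<ominus> a \<otimes> defect (Suc n) i"
    using a fin_seqs_closed[OF lift_fin_seqs, of n i] fin_seqs_closed[OF lift_fin_seqs, of "Suc n" i]
      unit_seq_closed[of n i] unit_seq_closed[of "Suc n" i]
    unfolding d_def defect_def fin_seqs_add fin_seqs_smult by algebra
  ultimately show ?thesis
    by simp
qed

lemma defect_zero: "defect 0 i \<ominus> a [^] n \<otimes> defect n i \<in> P"
proof (induction n)
  case 0
  then show ?case
    using defect_closed P_zero by (simp add: a_minus_self)
next
  case (Suc n)
  have "x \<ominus> (p \<otimes> a) \<otimes> z = (x \<ominus> p \<otimes> y) \<oplus> p \<otimes> (y \<ominus> a \<otimes> z)"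
    if "x \<in> carrier R" "y \<in> carrier R" "z \<in> carrier R" "p \<in> carrier R" for x y z p
    using that a by algebra
  then have "defect 0 i \<ominus> a [^] Suc n \<otimes> defect (Suc n) i =
      (defect 0 i \<ominus> a [^] n \<otimes> defect n i) \<oplus> a [^] n \<otimes> (defect n i \<ominus> a \<otimes> defect (Suc n) i)"
    using defect_closed nat_pow_closed[OF a(1)] by (simp add: nat_pow_Suc)
  also have "\<dots> \<in> P"
    using Suc defect_step[of n i] a by (intro P_add P_lmult) auto
  finally show ?case .
qed

text \<open>Beyond the support of \<open>w\<^sub>0\<close>, the relation \<open>w\<^sub>0 \<equiv> a\<^sup>m w\<^sub>m\<close> and primality put
  \<open>w\<^sub>m\<close> into \<open>P\<close>; evaluating the kernel element \<open>e\<^sub>m - w\<^sub>m\<close> truncated at the support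
  then shows that \<open>a\<close> is a unit modulo \<open>P\<close>.\<close>

lemma defect_beyond_support:
  assumes N: "vanishes_above R N (defect 0)" and i: "N < i"
  shows "defect (Suc N) i \<in> P"
proof -
  have "\<ominus> (a [^] Suc N \<otimes> defect (Suc N) i) \<in> P"
    using defect_zero[of i "Suc N"] N i a defect_closed by (simp add: vanishes_above_def a_minus_def)
  then have "a [^] Suc N \<otimes> defect (Suc N) i \<in> P"
    using P_neg a defect_closed by fastforce
  then show ?thesis
    using pow_mult_in_P_imp defect_closed by blast
qed

lemma truncated_defect_kernel:
  assumes N: "vanishes_above R N (defect 0)"
  defines "v \<equiv> \<lambda>i. if i \<le> N then defect (Suc N) i else \<zero>"
  shows "(\<lambda>i. unit_seq R (Suc N) i \<ominus> v i) \<in> kernel_seqs"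
proof -
  let ?m = "Suc N"
  have v: "\<And>i. v i \<in> carrier R" "vanishes_above R N v"
    using defect_closed by (simp_all add: v_def vanishes_above_def)
  then have v_fs: "v \<in> carrier (fin_seqs R)"
    by (rule fin_seqs_if_vanishes_above)
  have "(defect ?m \<ominus>\<^bsub>fin_seqs R\<^esub> v) i \<in> P" for i
    unfolding fin_seqs_minus[OF defect_fin_seqs v_fs]
    using defect_beyond_support[OF N] defect_closed by (auto simp: v_def a_minus_self a_minus_zero P_zero)
  then have "defect ?m \<ominus>\<^bsub>fin_seqs R\<^esub> v \<in> P_seqs"
    using F.minus_closed[OF defect_fin_seqs v_fs] by (simp add: P_seqs_def)
  then have "lift ?m \<oplus>\<^bsub>fin_seqs R\<^esub> (defect ?m \<ominus>\<^bsub>fin_seqs R\<^esub> v) \<in> kernel_seqs"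
    using C.W_add lift_kernel P_seqs_subset_kernel_seqs by blast
  moreover have "lift ?m \<oplus>\<^bsub>fin_seqs R\<^esub> (defect ?m \<ominus>\<^bsub>fin_seqs R\<^esub> v) = (\<lambda>i. unit_seq R ?m i \<ominus> v i)"
  proof
    fix i
    have "lift ?m i \<in> carrier R" "unit_seq R ?m i \<in> carrier R" "v i \<in> carrier R"
      using fin_seqs_closed[OF lift_fin_seqs] unit_seq_closed v(1) by auto
    then show "(lift ?m \<oplus>\<^bsub>fin_seqs R\<^esub> (defect ?m \<ominus>\<^bsub>fin_seqs R\<^esub> v)) i = unit_seq R ?m i \<ominus> v i"
      unfolding fin_seqs_minus[OF defect_fin_seqs v_fs] fin_seqs_add defect_def by algebra
  qed
  ultimately show ?thesis
    by simp
qed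

lemma retraction_contradiction: False
proof -
  obtain N where N: "vanishes_above R N (defect 0)"
    using fin_seqs_vanishes_above[OF defect_fin_seqs] by metis
  define v where "v i = (if i \<le> N then defect (Suc N) i else \<zero>)" for i
  have v: "\<And>i. v i \<in> carrier R" "vanishes_above R N v"
    using defect_closed by (simp_all add: v_def vanishes_above_def)
  have "vanishes_above R (Suc N) (\<lambda>i. unit_seq R (Suc N) i \<ominus> v i)"
    by (auto simp: vanishes_above_def unit_seq_def v_def a_minus_def)
  then have "scaled_eval R a (Suc N) (\<lambda>i. unit_seq R (Suc N) i \<ominus> v i) \<in> P"
    using kernel_seqs_scaled_eval truncated_defect_kernel[OF N] by (simp add: v_def)
  moreover have "scaled_eval R a (Suc N) (\<lambda>i. unit_seq R (Suc N) i \<ominus> v i) =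
      \<one> \<ominus> a \<otimes> scaled_eval R a N v"
    using scaled_eval_minus[OF unit_seq_closed v(1) a(1)] scaled_eval_unit_seq[OF a(1)]
      scaled_eval_shift[OF v(1) a(1) v(2), of 1] a
    by simp
  ultimately have "\<ominus> (\<one> \<ominus> a \<otimes> scaled_eval R a N v) \<in> P"
    by (simp add: P_neg)
  moreover have "\<ominus> (\<one> \<ominus> a \<otimes> scaled_eval R a N v) = a \<otimes> scaled_eval R a N v \<ominus> \<one>"
    using a v by (simp add: a_minus_minus_swap scaled_eval_closed)
  ultimately show False
    using a_nonunit[of "scaled_eval R a N v"] v a by (simp add: scaled_eval_closed)
qed

end

lemma ker_mod_not_retract:
  assumes k: "mod_lin R free_mod ker_mod k" and k_fixes: "\<And>X. X \<in> carrier ker_mod \<Longrightarrow> k X = X"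
  shows False
proof -
  have "\<exists>x. x \<in> kernel_seqs \<and> k (cls (unit_seq R n)) = cls x" for n
  proof -
    have "cls (unit_seq R n) \<in> carrier free_mod"
      using unit_seq_fin_seqs by (simp add: F.quot_carrier)
    then have "k (cls (unit_seq R n)) \<in> carrier ker_mod"
      using mod_lin_closed[OF k] by blast
    then show ?thesis
      by auto
  qed
  then obtain lift where lift_kernel: "\<And>n. lift n \<in> kernel_seqs"
    and lift: "\<And>n. k (cls (unit_seq R n)) = cls (lift n)"
    by metis
  show False
    by (rule retraction_contradiction[OF k k_fixes lift_kernel lift])
qed

lemma ker_mod_not_pure_injective: "\<not> pure_injective R ker_mod"
proof
  assume "pure_injective R ker_mod"
  moreover have "mod_lin R ker_mod ker_mod id"
    by (simp add: mod_lin_def)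
  ultimately obtain k where k: "mod_lin R free_mod ker_mod k" "\<forall>X\<in>carrier ker_mod. k (id X) = id X"
    using pure_exact_ker_mod unfolding pure_injective_def by (elim allE impE) auto
  show False
    by (rule ker_mod_not_retract[OF k(1)]) (use k(2) in auto)
qed

end

lemma (in cring) exists_nonunit_mod_prime:
  assumes P: "primeideal P R" and not_max: "\<not> maximalideal P R"
  obtains a where "a \<in> carrier R" "a \<notin> P" "\<And>d. d \<in> carrier R \<Longrightarrow> a \<otimes> d \<ominus> \<one> \<notin> P"
proof -
  have P_ideal: "ideal P R"
    using P by (simp add: primeideal_def)
  have "\<exists>J. ideal J R \<and> P \<subseteq> J \<and> J \<noteq> P \<and> J \<noteq> carrier R"
  proof (rule ccontr)
    assume "\<nexists>J. ideal J R \<and> P \<subseteq> J \<and> J \<noteq> P \<and> J \<noteq> carrier R"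
    then have "maximalideal P R"
      by (intro maximalidealI[OF P_ideal primeideal.I_notcarr[OF P]]) auto
    with not_max show False ..
  qed
  then obtain J where J: "ideal J R" "P \<subseteq> J" "J \<noteq> P" "J \<noteq> carrier R"
    by blast
  then obtain a where a: "a \<in> J" "a \<notin> P"
    by blast
  have a_carrier: "a \<in> carrier R"
    using ideal.Icarr[OF J(1) a(1)] .
  have "a \<otimes> d \<ominus> \<one> \<notin> P" if d: "d \<in> carrier R" for d
  proof
    assume "a \<otimes> d \<ominus> \<one> \<in> P"
    then have "a \<otimes> d \<ominus> \<one> \<in> J"
      using J(2) by auto
    then have "a \<otimes> d \<ominus> (a \<otimes> d \<ominus> \<one>) \<in> J"
      using ideal.I_r_closed[OF J(1) a(1) d] additive_subgroup.a_closed[OF ideal.axioms(1)[OF J(1)]]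
        additive_subgroup.a_inv_closed[OF ideal.axioms(1)[OF J(1)]]
      by (simp add: a_minus_def)
    moreover have "a \<otimes> d \<ominus> (a \<otimes> d \<ominus> \<one>) = \<one>"
      using a_carrier d by algebra
    ultimately show False
      using ideal.one_imp_carrier[OF J(1)] J(4) by simp
  qed
  then show thesis
    using that a(2) a_carrier by blast
qed

theorem proposition3p2:
  fixes R :: "'a ring"
  assumes "cring R"
    and "\<forall>M :: ('a, (nat \<Rightarrow> 'a) set set) module.
           module R M \<and> semi_compact R M \<longrightarrow> pure_injective R M"
  shows "\<forall>P. primeideal P R \<longrightarrow> maximalideal P R"
proof (intro allI impI)
  fix P
  assume P: "primeideal P R"
  show "maximalideal P R"
  proof (rule ccontr)
    assume "\<not> maximalideal P R"
    then obtain a where a: "a \<in> carrier R" "a \<notin> P"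
      "\<And>d. d \<in> carrier R \<Longrightarrow> a \<otimes>\<^bsub>R\<^esub> d \<ominus>\<^bsub>R\<^esub> \<one>\<^bsub>R\<^esub> \<notin> P"
      using cring.exists_nonunit_mod_prime[OF assms(1) P] by blast
    interpret nonunit_mod_prime R P a
      by (rule nonunit_mod_prime.intro[OF cring_modules.intro[OF assms(1)]
          nonunit_mod_prime_axioms.intro[OF P a]])
    show False
      using assms(2) ker_mod_module ker_mod_semi_compact ker_mod_not_pure_injective by blast
  qed
qed

end
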